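(* Let $r>0$, assume $W$ satisfies (H), and let $R>2r+1$. Then the minimization problem $$\inf\Big\{\mathcal{E}_{(-R,R)}(u)\ :\ u\in L^\infty(\mathbb{R}),\ u=1\text{ a.e. on }[R-r,\infty),\ u=-1\text{ a.e. on }(-\infty,-R+r]\Big\}$$ admits a minimizer $u_R$ which is monotone nondecreasing, and $\mathcal{E}_{(-R,R)}(u_R)\le\min\{4/r,\,4+c_W\}$.
   Context: For an interval $I$, $\operatorname{osc}_I u:=\operatorname{ess\,sup}_I u-\operatorname{ess\,inf}_I u$. $\mathcal{E}_{(a,b)}(u):=\frac1{2r^2}\int_a^b(\operatorname{osc}_{(x-r,x+r)}u)^2dx+\int_a^bW(u(x))dx$. Assumption (H): $W\in C(\mathbb{R})$, $W(\pm1)=0<W(t)$ for $t\ne\pm1$; $W$ strictly decreasing on $(-\infty,-1)$, strictly increasing on $(1,\infty)$; $W$ even on $[-1,1]$ with unique local maximum in $[-1,1]$ at $0$. $c_W:=\int_{-1}^1W(s)ds$. *)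

theory Defs
  imports "HOL-Analysis.Analysis" "HOL-Probability.Essential_Supremum"
begin

definition ess_sup_on :: "real \<Rightarrow> real \<Rightarrow> (real \<Rightarrow> real) \<Rightarrow> ereal" where
  "ess_sup_on a b u = esssup (restrict_space lborel {a<..<b}) (\<lambda>y. ereal (u y))"

definition ess_inf_on :: "real \<Rightarrow> real \<Rightarrow> (real \<Rightarrow> real) \<Rightarrow> ereal" where
  "ess_inf_on a b u = - esssup (restrict_space lborel {a<..<b}) (\<lambda>y. - ereal (u y))"

text \<open>Oscillation of u over (a,b) (finite for essentially bounded u).\<close>
definition osc_on :: "real \<Rightarrow> real \<Rightarrow> (real \<Rightarrow> real) \<Rightarrow> real" where
  "osc_on a b u = real_of_ereal (ess_sup_on a b u - ess_inf_on a b u)"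

definition energy :: "real \<Rightarrow> (real \<Rightarrow> real) \<Rightarrow> real \<Rightarrow> real \<Rightarrow> (real \<Rightarrow> real) \<Rightarrow> real" where
  "energy r W a b u =
     1 / (2 * r\<^sup>2) * (LINT x:{a<..<b}|lborel. (osc_on (x - r) (x + r) u)\<^sup>2)
     + (LINT x:{a<..<b}|lborel. W (u x))"

definition Linf :: "(real \<Rightarrow> real) set" where
  "Linf = {u. u \<in> borel_measurable lborel \<and> (\<exists>C. AE x in lborel. \<bar>u x\<bar> \<le> C)}"

definition admissible :: "real \<Rightarrow> real \<Rightarrow> (real \<Rightarrow> real) \<Rightarrow> bool" where
  "admissible r R u \<longleftrightarrow> u \<in> Linf
     \<and> (AE x in lborel. x \<ge> R - r \<longrightarrow> u x = 1)
     \<and> (AE x in lborel. x \<le> - R + r \<longrightarrow> u x = -1)"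

definition loc_max_on_unit :: "(real \<Rightarrow> real) \<Rightarrow> real \<Rightarrow> bool" where
  "loc_max_on_unit W t \<longleftrightarrow> t \<in> {-1..1} \<and>
     (\<exists>e>0. \<forall>s\<in>{-1..1}. \<bar>s - t\<bar> < e \<longrightarrow> W s \<le> W t)"

definition hyp_H :: "(real \<Rightarrow> real) \<Rightarrow> bool" where
  "hyp_H W \<longleftrightarrow> continuous_on UNIV W
     \<and> W 1 = 0 \<and> W (-1) = 0 \<and> (\<forall>t. t \<noteq> 1 \<and> t \<noteq> -1 \<longrightarrow> W t > 0)
     \<and> (\<forall>s t. s < t \<and> t < -1 \<longrightarrow> W t < W s)
     \<and> (\<forall>s t. 1 < s \<and> s < t \<longrightarrow> W s < W t)
     \<and> (\<forall>t\<in>{-1..1}. W (-t) = W t)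
     \<and> (\<forall>t. loc_max_on_unit W t \<longleftrightarrow> t = 0)"

definition c_W :: "(real \<Rightarrow> real) \<Rightarrow> real" where
  "c_W W = integral {-1..1} W"

end

theory Submission
  imports Defs
begin

text \<open>Replacing the oscillation over \<open>(x - r, x + r)\<close> by the increment \<open>u (x + r) - u (x - r)\<close>
  decouples the problem along the lattices \<open>s + 2r\<nat>\<close>: on each lattice it becomes the discrete
  problem of minimizing \<open>\<kappa> \<Sum> (a (k+1) - a k)\<^sup>2 + \<Sum> W (a k)\<close> over chains running from \<open>-1\<close> to \<open>1\<close>.
  The discrete energy is submodular under pointwise \<open>max\<close>/\<open>min\<close>, so each discrete problem has a
  greatest minimizer, and comparing chain lengths \<open>n\<close> and \<open>n + 1\<close> shows that these greatest
  minimizers interleave. Gluing them along the lattices gives a nondecreasing \<open>u\<close>. For monotone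
  \<open>u\<close> the oscillation is at most the increment, while for an arbitrary admissible \<open>v\<close> the
  increment of its truncation to \<open>[-1, 1]\<close> is a.e.\ at most the oscillation; hence \<open>u\<close> is a
  minimizer. The bounds \<open>4 / r\<close> and \<open>4 + c_W W\<close> are the energies of the unit step at \<open>0\<close> and of
  \<open>max (-1) (min 1 x)\<close>.\<close>

section \<open>Greatest minimal chains of the discrete problem\<close>

definition chain_space :: "nat \<Rightarrow> (nat \<Rightarrow> real) set" where
  "chain_space n = {a. a 0 = -1 \<and> (\<forall>k. 1 \<le> k \<and> k \<le> n \<longrightarrow> -1 \<le> a k \<and> a k \<le> 1) \<and> (\<forall>k>n. a k = 1)}"

definition chain_energy :: "real \<Rightarrow> (real \<Rightarrow> real) \<Rightarrow> nat \<Rightarrow> (nat \<Rightarrow> real) \<Rightarrow> real" where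
  "chain_energy c W n a = c * (\<Sum>k\<le>n. (a (Suc k) - a k)\<^sup>2) + (\<Sum>k\<in>{1..n}. W (a k))"

lemma chain_space_range:
  assumes "a \<in> chain_space n"
  shows "-1 \<le> a k" "a k \<le> 1"
proof -
  have "-1 \<le> a k \<and> a k \<le> 1"
    using assms unfolding chain_space_def by (cases "k = 0"; cases "n < k") (auto simp: not_less)
  then show "-1 \<le> a k" "a k \<le> 1" by auto
qed

lemma chain_space_max_min:
  assumes "a \<in> chain_space n" "b \<in> chain_space n"
  shows "(\<lambda>k. max (a k) (b k)) \<in> chain_space n" "(\<lambda>k. min (a k) (b k)) \<in> chain_space n"
  using assms by (auto simp: chain_space_def)

lemma sq_diff_max_min_le:
  fixes x x' y y' :: real
  shows "(max y y' - max x x')\<^sup>2 + (min y y' - min x x')\<^sup>2 \<le> (y - x)\<^sup>2 + (y' - x')\<^sup>2"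
proof (cases "y \<le> y'"; cases "x \<le> x'")
  assume a: "y \<le> y'" "\<not> x \<le> x'"
  have "0 \<le> (y' - y) * (x - x')" using a by simp
  then show ?thesis using a by (simp add: max_def min_def power2_eq_square algebra_simps)
next
  assume a: "\<not> y \<le> y'" "x \<le> x'"
  have "0 \<le> (y - y') * (x' - x)" using a by simp
  then show ?thesis using a by (simp add: max_def min_def power2_eq_square algebra_simps)
qed (simp_all add: max_def min_def)

lemma chain_energy_submodular:
  assumes "c \<ge> 0"
  shows "chain_energy c W n (\<lambda>k. max (a k) (b k)) + chain_energy c W n (\<lambda>k. min (a k) (b k))
         \<le> chain_energy c W n a + chain_energy c W n b"
proof -
  have "(\<Sum>k\<le>n. (max (a (Suc k)) (b (Suc k)) - max (a k) (b k))\<^sup>2)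
          + (\<Sum>k\<le>n. (min (a (Suc k)) (b (Suc k)) - min (a k) (b k))\<^sup>2)
        \<le> (\<Sum>k\<le>n. (a (Suc k) - a k)\<^sup>2) + (\<Sum>k\<le>n. (b (Suc k) - b k)\<^sup>2)"
    unfolding sum.distrib[symmetric] by (intro sum_mono sq_diff_max_min_le)
  from mult_left_mono[OF this assms] have
    "c * (\<Sum>k\<le>n. (max (a (Suc k)) (b (Suc k)) - max (a k) (b k))\<^sup>2)
       + c * (\<Sum>k\<le>n. (min (a (Suc k)) (b (Suc k)) - min (a k) (b k))\<^sup>2)
     \<le> c * (\<Sum>k\<le>n. (a (Suc k) - a k)\<^sup>2) + c * (\<Sum>k\<le>n. (b (Suc k) - b k)\<^sup>2)"
    by (simp add: distrib_left)
  moreover have "(\<Sum>k\<in>{1..n}. W (max (a k) (b k))) + (\<Sum>k\<in>{1..n}. W (min (a k) (b k)))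
               = (\<Sum>k\<in>{1..n}. W (a k)) + (\<Sum>k\<in>{1..n}. W (b k))"
    unfolding sum.distrib[symmetric] by (intro sum.cong) (auto simp: max_def min_def)
  ultimately show ?thesis unfolding chain_energy_def by linarith
qed

lemma chain_space_PiE:
  "chain_space n = Pi\<^sub>E UNIV (\<lambda>k. if k = 0 then {-1} else if k \<le> n then {-1..1} else {1::real})"
proof -
  have "a \<in> chain_space n \<longleftrightarrow>
        (\<forall>k. a k \<in> (if k = 0 then {-1} else if k \<le> n then {-1..1} else {1::real}))" for a
  proof
    assume "a \<in> chain_space n"
    then show "\<forall>k. a k \<in> (if k = 0 then {-1} else if k \<le> n then {-1..1} else {1::real})"
      unfolding chain_space_def by (auto simp: not_le)
  next
    assume h: "\<forall>k. a k \<in> (if k = 0 then {-1} else if k \<le> n then {-1..1} else {1::real})"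
    have "-1 \<le> a k \<and> a k \<le> 1" if "1 \<le> k" "k \<le> n" for k using h[rule_format, of k] that by auto
    moreover have "a k = 1" if "n < k" for k using h[rule_format, of k] that by auto
    ultimately show "a \<in> chain_space n" unfolding chain_space_def using h[rule_format, of 0] by auto
  qed
  then show ?thesis unfolding PiE_UNIV_domain Pi_def by (simp add: set_eq_iff)
qed

lemma compact_chain_space: "compact (chain_space n)"
proof -
  have "compactin (product_topology (\<lambda>i. euclidean) UNIV)
          (Pi\<^sub>E UNIV (\<lambda>k. if k = 0 then {-1} else if k \<le> n then {-1..1} else {1::real}))"
    by (subst compactin_PiE) auto
  then show ?thesis
    unfolding chain_space_PiE euclidean_product_topology by (simp add: compactin_euclidean_iff)
qed

lemma continuous_on_chain_energy:
  assumes "continuous_on UNIV W"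
  shows "continuous_on S (chain_energy c W n)"
proof -
  have coord: "continuous_on S (\<lambda>x::nat\<Rightarrow>real. x k)" for k
    by (rule continuous_on_subset[OF continuous_on_product_coordinates]) auto
  show ?thesis
    unfolding chain_energy_def
    by (intro continuous_intros continuous_on_compose2[OF assms] coord) auto
qed

lemma chain_energy_max_of_minimizers:
  assumes "c \<ge> 0" "a \<in> chain_space n" "g \<in> chain_space n"
    and min: "\<And>b. b \<in> chain_space n \<Longrightarrow> chain_energy c W n g \<le> chain_energy c W n b"
    and "chain_energy c W n a \<le> chain_energy c W n g"
  shows "chain_energy c W n (\<lambda>k. max (a k) (g k)) = chain_energy c W n g"
  using chain_energy_submodular[OF assms(1), of W n a g] chain_space_max_min[OF assms(2,3)]
    min assms(5) by (smt (verit))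

text \<open>Among the minimizers (a compact set) one maximizing \<open>\<Sum> a k\<close> dominates every other
  minimizer, since by submodularity the pointwise maximum of two minimizers is again one.\<close>

lemma greatest_minimal_chain_exists:
  assumes W: "continuous_on UNIV W" and c: "c \<ge> 0"
  shows "\<exists>g\<in>chain_space n. (\<forall>a\<in>chain_space n. chain_energy c W n g \<le> chain_energy c W n a) \<and>
           (\<forall>a\<in>chain_space n. chain_energy c W n a \<le> chain_energy c W n g \<longrightarrow> (\<forall>k. a k \<le> g k))"
proof -
  let ?F = "chain_energy c W n" and ?D = "chain_space n"
  have "(\<lambda>k. if k = 0 then -1 else 1) \<in> ?D" by (auto simp: chain_space_def)
  then obtain a0 where a0: "a0 \<in> ?D" "\<forall>a\<in>?D. ?F a0 \<le> ?F a"
    using continuous_attains_inf[OF compact_chain_space _ continuous_on_chain_energy[OF W]] by blast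
  define M where "M = ?D \<inter> ?F -` {?F a0}"
  have "compact M"
    unfolding M_def
    by (intro compact_Int_closed compact_chain_space
        closed_vimage continuous_on_chain_energy[OF W]) auto
  moreover have "a0 \<in> M" unfolding M_def using a0 by auto
  moreover have "continuous_on M (\<lambda>a::nat\<Rightarrow>real. \<Sum>k\<in>{1..n}. a k)"
    by (intro continuous_intros continuous_on_subset[OF continuous_on_product_coordinates]) auto
  ultimately obtain g where g: "g \<in> M" "\<forall>a\<in>M. (\<Sum>k\<in>{1..n}. a k) \<le> (\<Sum>k\<in>{1..n}. g k)"
    using continuous_attains_sup[of M "\<lambda>a. \<Sum>k\<in>{1..n}. a k"] by blast
  have gD: "g \<in> ?D" and min: "\<forall>a\<in>?D. ?F g \<le> ?F a" using g a0 unfolding M_def by auto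
  have greatest: "a k \<le> g k" if aD: "a \<in> ?D" and le: "?F a \<le> ?F g" for a k
  proof -
    have "?F (\<lambda>k. max (a k) (g k)) = ?F g"
      using chain_energy_max_of_minimizers[OF c aD gD _ le] min by blast
    then have "(\<lambda>k. max (a k) (g k)) \<in> M"
      using chain_space_max_min[OF aD gD] g(1) unfolding M_def by auto
    then have "(\<Sum>k\<in>{1..n}. max (a k) (g k) - g k) \<le> 0" using g(2) by (simp add: sum_subtractf)
    then have "(\<Sum>k\<in>{1..n}. max (a k) (g k) - g k) = 0" by (intro antisym sum_nonneg) auto
    then have "\<forall>k\<in>{1..n}. max (a k) (g k) - g k = 0"
      by (subst sum_nonneg_eq_0_iff[symmetric]) auto
    moreover have "a k = g k" if "k \<notin> {1..n}"
      using that aD gD by (cases "k = 0") (auto simp: chain_space_def)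
    ultimately show "a k \<le> g k"
      by (cases "k \<in> {1..n}") (force, simp)
  qed
  show ?thesis
  proof (intro bexI[OF _ gD] conjI ballI impI allI)
    fix a assume "a \<in> ?D" then show "?F g \<le> ?F a" using min by blast
  next
    fix a k assume "a \<in> ?D" "?F a \<le> ?F g" then show "a k \<le> g k" by (rule greatest)
  qed
qed

definition greatest_minimal_chain :: "real \<Rightarrow> (real \<Rightarrow> real) \<Rightarrow> nat \<Rightarrow> nat \<Rightarrow> real" where
  "greatest_minimal_chain c W n = (SOME g. g \<in> chain_space n
     \<and> (\<forall>a\<in>chain_space n. chain_energy c W n g \<le> chain_energy c W n a)
     \<and> (\<forall>a\<in>chain_space n. chain_energy c W n a \<le> chain_energy c W n g \<longrightarrow> (\<forall>k. a k \<le> g k)))"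

lemma greatest_minimal_chain:
  assumes "continuous_on UNIV W" "c \<ge> 0"
  shows "greatest_minimal_chain c W n \<in> chain_space n"
    and "\<And>a. a \<in> chain_space n \<Longrightarrow>
           chain_energy c W n (greatest_minimal_chain c W n) \<le> chain_energy c W n a"
    and "\<And>a k. a \<in> chain_space n \<Longrightarrow>
           chain_energy c W n a \<le> chain_energy c W n (greatest_minimal_chain c W n) \<Longrightarrow>
           a k \<le> greatest_minimal_chain c W n k"
  using someI_ex[OF greatest_minimal_chain_exists[OF assms, of n, unfolded Bex_def]]
  unfolding greatest_minimal_chain_def[symmetric] by auto

lemma chain_space_Suc: "a \<in> chain_space n \<Longrightarrow> a \<in> chain_space (Suc n)"
  by (fastforce simp: chain_space_def le_Suc_eq)

lemma chain_space_SucD: "b \<in> chain_space (Suc n) \<Longrightarrow> b (Suc n) = 1 \<Longrightarrow> b \<in> chain_space n"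
  by (auto simp: chain_space_def) (metis Suc_lessI)

lemma chain_energy_Suc:
  assumes "a \<in> chain_space n" "W 1 = 0"
  shows "chain_energy c W (Suc n) a = chain_energy c W n a"
  using assms by (simp add: chain_energy_def chain_space_def)

definition chain_shift :: "(nat \<Rightarrow> real) \<Rightarrow> nat \<Rightarrow> real" where
  "chain_shift a k = (case k of 0 \<Rightarrow> -1 | Suc j \<Rightarrow> a j)"

lemma chain_shift_in:
  assumes "a \<in> chain_space n"
  shows "chain_shift a \<in> chain_space (Suc n)"
  using chain_space_range[OF assms] assms
  by (auto simp: chain_space_def chain_shift_def split: nat.splits)

lemma chain_energy_shift:
  assumes "a \<in> chain_space n" "W (-1) = 0"
  shows "chain_energy c W (Suc n) (chain_shift a) = chain_energy c W n a"
proof -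
  have a0: "a 0 = -1" using assms(1) by (simp add: chain_space_def)
  have "(\<Sum>k\<le>Suc n. (chain_shift a (Suc k) - chain_shift a k)\<^sup>2) = (\<Sum>k\<le>n. (a (Suc k) - a k)\<^sup>2)"
    by (subst sum.atMost_Suc_shift) (simp add: chain_shift_def a0)
  moreover have "(\<Sum>k\<in>{1..Suc n}. W (chain_shift a k)) = (\<Sum>k\<in>{0..n}. W (a k))"
    using sum.shift_bounds_cl_Suc_ivl[of "\<lambda>k. W (chain_shift a k)" 0 n]
    by (simp add: chain_shift_def)
  moreover have "(\<Sum>k\<in>{0..n}. W (a k)) = (\<Sum>k\<in>{1..n}. W (a k))"
    by (simp add: sum.atLeast_Suc_atMost[of 0 n, simplified] a0 assms(2))
  ultimately show ?thesis unfolding chain_energy_def by simp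
qed

lemma chain_shift_inverse:
  assumes "b \<in> chain_space (Suc n)" "b 1 = -1"
  shows "(\<lambda>k. b (Suc k)) \<in> chain_space n" "chain_shift (\<lambda>k. b (Suc k)) = b"
  using assms unfolding chain_space_def chain_shift_def
  by (auto simp: fun_eq_iff split: nat.splits)

context
  fixes c :: real and W :: "real \<Rightarrow> real"
  assumes W: "continuous_on UNIV W" and c: "c \<ge> 0" and W1: "W 1 = 0" and Wm1: "W (-1) = 0"
begin

private abbreviation "g \<equiv> greatest_minimal_chain c W"
private abbreviation "F \<equiv> chain_energy c W"

private lemmas g_in = greatest_minimal_chain(1)[OF W c]
  and g_min = greatest_minimal_chain(2)[OF W c]
  and g_greatest = greatest_minimal_chain(3)[OF W c]

text \<open>Comparing \<open>g n\<close> with \<open>g (Suc n)\<close>, resp.\ the shifted \<open>g n\<close> with \<open>g (Suc n)\<close>,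
  by submodularity: the maximum, resp.\ minimum, is again admissible for the shorter problem.\<close>

lemma greatest_minimal_chain_Suc_le: "g (Suc n) k \<le> g n k"
proof -
  have aD: "g n \<in> chain_space (Suc n)" using chain_space_Suc[OF g_in] .
  note maxmin = chain_space_max_min[OF g_in aD]
  define t where "t = (\<lambda>k. max (g (Suc n) k) (g n k))"
  have "t (Suc n) = 1" using g_in[of n] g_in[of "Suc n"] unfolding t_def chain_space_def by auto
  then have tD: "t \<in> chain_space n" using chain_space_SucD maxmin(1) unfolding t_def by blast
  have "F (Suc n) t + F (Suc n) (\<lambda>k. min (g (Suc n) k) (g n k))
        \<le> F (Suc n) (g (Suc n)) + F (Suc n) (g n)"
    unfolding t_def by (rule chain_energy_submodular[OF c])
  then have "F n t \<le> F n (g n)"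
    using g_min[OF maxmin(2)] chain_energy_Suc[where c=c and W=W, OF tD W1]
      chain_energy_Suc[where c=c and W=W, OF g_in[of n] W1] by linarith
  then have "t k \<le> g n k" using g_greatest[OF tD] by blast
  then show ?thesis unfolding t_def by simp
qed

lemma greatest_minimal_chain_le_Suc_shift: "g n k \<le> g (Suc n) (Suc k)"
proof -
  have shD: "chain_shift (g n) \<in> chain_space (Suc n)" using chain_shift_in[OF g_in] .
  note maxmin = chain_space_max_min[OF g_in shD]
  define t where "t = (\<lambda>k. min (g (Suc n) k) (chain_shift (g n) k))"
  have "t 1 = -1"
    using g_in[of n] chain_space_range(1)[OF g_in, of "Suc n" 1]
    unfolding t_def chain_shift_def chain_space_def by simp
  note u = chain_shift_inverse[OF maxmin(2)[folded t_def] this]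
  have "F n (g n) \<le> F n (\<lambda>k. t (Suc k))" using g_min[OF u(1)] .
  then have "F (Suc n) (chain_shift (g n)) \<le> F (Suc n) t"
    using chain_energy_shift[where c=c and W=W, OF g_in[of n] Wm1]
      chain_energy_shift[where c=c and W=W, OF u(1) Wm1] u(2) by simp
  moreover have "F (Suc n) (\<lambda>k. max (g (Suc n) k) (chain_shift (g n) k)) + F (Suc n) t
      \<le> F (Suc n) (g (Suc n)) + F (Suc n) (chain_shift (g n))"
    unfolding t_def by (rule chain_energy_submodular[OF c])
  ultimately have "F (Suc n) (\<lambda>k. max (g (Suc n) k) (chain_shift (g n) k)) \<le> F (Suc n) (g (Suc n))"
    by linarith
  then have "max (g (Suc n) (Suc k)) (chain_shift (g n) (Suc k)) \<le> g (Suc n) (Suc k)"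
    using g_greatest[OF maxmin(1)] by blast
  then show ?thesis by (simp add: chain_shift_def)
qed

lemma greatest_minimal_chain_range: "-1 \<le> g n k" "g n k \<le> 1"
  by (rule chain_space_range[OF g_in])+

lemma greatest_minimal_chain_0: "g n 0 = -1"
  using g_in[of n] by (simp add: chain_space_def)

lemma greatest_minimal_chain_beyond: "n < k \<Longrightarrow> g n k = 1"
  using g_in[of n] by (simp add: chain_space_def)

lemma greatest_minimal_chain_mono: "k \<le> k' \<Longrightarrow> g n k \<le> g n k'"
proof -
  have "g n j \<le> g n (Suc j)" for j
    using greatest_minimal_chain_le_Suc_shift[of n j] greatest_minimal_chain_Suc_le[of n "Suc j"]
    by linarith
  then show "k \<le> k' \<Longrightarrow> g n k \<le> g n k'" by (rule lift_Suc_mono_le)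
qed

lemma greatest_minimal_chain_antimono_length: "n \<le> m \<Longrightarrow> g m k \<le> g n k"
proof (induction m rule: dec_induct)
  case (step m)
  then show ?case using greatest_minimal_chain_Suc_le[of m k] by linarith
qed simp

lemma greatest_minimal_chain_cross:
  assumes "k < k'" "m \<le> Suc n"
  shows "g n k \<le> g m k'"
proof (cases "m \<le> n")
  case True
  then show ?thesis
    using greatest_minimal_chain_antimono_length[OF True, of k]
      greatest_minimal_chain_mono[of k k' m] assms by linarith
next
  case False
  then have "m = Suc n" using assms by simp
  then show ?thesis
    using greatest_minimal_chain_le_Suc_shift[of n k]
      greatest_minimal_chain_mono[of "Suc k" k' "Suc n"] assms by simp
qed

end

section \<open>Essential suprema over intervals\<close>

lemma AE_restrict_space_Ioo:
  "(AE y in restrict_space lborel {a<..<b::real}. P y) \<longleftrightarrow> (AE y in lborel. a < y \<and> y < b \<longrightarrow> P y)"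
  by (subst AE_restrict_space_iff) auto

lemma ess_sup_on_le:
  assumes "v \<in> borel_measurable lborel" "AE y in lborel. a < y \<and> y < b \<longrightarrow> ereal (v y) \<le> z"
  shows "ess_sup_on a b v \<le> z"
  unfolding ess_sup_on_def
proof (rule esssup_I)
  show "(\<lambda>y. ereal (v y)) \<in> borel_measurable (restrict_space lborel {a<..<b})"
    using assms(1) by (intro measurable_restrict_space1 borel_measurable_ereal)
qed (use assms(2) in \<open>simp add: AE_restrict_space_Ioo\<close>)

lemma AE_le_ess_sup_on:
  assumes "v \<in> borel_measurable lborel"
  shows "AE y in lborel. a < y \<and> y < b \<longrightarrow> ereal (v y) \<le> ess_sup_on a b v"
  using esssup_AE[where M="restrict_space lborel {a<..<b}" and f="\<lambda>y. ereal (v y)"]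
  unfolding ess_sup_on_def AE_restrict_space_Ioo .

lemma ess_inf_on_conv_ess_sup_on: "ess_inf_on a b v = - ess_sup_on a b (\<lambda>y. - v y)"
  unfolding ess_inf_on_def ess_sup_on_def by simp

lemma ess_inf_on_ge:
  assumes "v \<in> borel_measurable lborel" "AE y in lborel. a < y \<and> y < b \<longrightarrow> z \<le> ereal (v y)"
  shows "z \<le> ess_inf_on a b v"
proof -
  have "ess_sup_on a b (\<lambda>y. - v y) \<le> - z"
    by (rule ess_sup_on_le)
       (use assms in \<open>auto elim!: eventually_mono,
        metis ereal_minus_le_minus uminus_ereal.simps(1)\<close>)
  then show ?thesis
    unfolding ess_inf_on_conv_ess_sup_on by (metis ereal_minus_le_minus ereal_uminus_uminus)
qed

lemma AE_ess_inf_on_le: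
  assumes "v \<in> borel_measurable lborel"
  shows "AE y in lborel. a < y \<and> y < b \<longrightarrow> ess_inf_on a b v \<le> ereal (v y)"
  using AE_le_ess_sup_on[of "\<lambda>y. - v y" a b] assms unfolding ess_inf_on_conv_ess_sup_on
  by (auto elim!: eventually_mono) (metis ereal_uminus_le_reorder uminus_ereal.simps(1))

lemma ess_inf_on_le_ess_sup_on:
  assumes "v \<in> borel_measurable lborel" "a < b"
  shows "ess_inf_on a b v \<le> ess_sup_on a b v"
proof (rule ccontr)
  assume "\<not> ?thesis"
  then have "AE y in lborel. y \<notin> {a<..<b}"
    using AE_le_ess_sup_on[OF assms(1), of a b] AE_ess_inf_on_le[OF assms(1), of a b]
    by (auto elim!: eventually_rev_mp)
  then have "{a<..<b} \<in> null_sets lborel" by (subst AE_iff_null_sets) auto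
  then show False using assms(2) by (simp add: null_sets_def emeasure_lborel_Ioo)
qed

lemma osc_on_essentially_bounded:
  assumes "v \<in> borel_measurable lborel" "a < b" "AE y in lborel. \<bar>v y\<bar> \<le> C"
  shows "ess_sup_on a b v = ereal (real_of_ereal (ess_sup_on a b v))"
    and "ess_inf_on a b v = ereal (real_of_ereal (ess_inf_on a b v))"
    and "osc_on a b v = real_of_ereal (ess_sup_on a b v) - real_of_ereal (ess_inf_on a b v)"
    and "0 \<le> osc_on a b v" "osc_on a b v \<le> 2 * C"
proof -
  have sup: "ess_sup_on a b v \<le> ereal C"
    by (rule ess_sup_on_le[OF assms(1)]) (use assms(3) in \<open>auto elim!: eventually_mono\<close>)
  have inf: "ereal (-C) \<le> ess_inf_on a b v"
    by (rule ess_inf_on_ge[OF assms(1)]) (use assms(3) in \<open>auto elim!: eventually_mono\<close>)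
  note le = ess_inf_on_le_ess_sup_on[OF assms(1,2)]
  obtain s where s: "ess_sup_on a b v = ereal s" using sup inf le by (cases "ess_sup_on a b v") auto
  obtain i where i: "ess_inf_on a b v = ereal i" using sup inf le by (cases "ess_inf_on a b v") auto
  show "ess_sup_on a b v = ereal (real_of_ereal (ess_sup_on a b v))"
    and "ess_inf_on a b v = ereal (real_of_ereal (ess_inf_on a b v))" using s i by auto
  show "osc_on a b v = real_of_ereal (ess_sup_on a b v) - real_of_ereal (ess_inf_on a b v)"
    unfolding osc_on_def using s i by simp
  show "0 \<le> osc_on a b v" "osc_on a b v \<le> 2 * C" unfolding osc_on_def using s i sup inf le by auto
qed

lemma osc_on_mono_le:
  assumes "mono u" "a < b" "\<And>y. \<bar>u y\<bar> \<le> C"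
  shows "osc_on a b u \<le> u b - u a"
proof -
  have m: "u \<in> borel_measurable lborel" using assms(1) borel_measurable_mono by simp
  have "AE y in lborel. \<bar>u y\<bar> \<le> C" using assms(3) by simp
  note f = osc_on_essentially_bounded[OF m assms(2) this]
  have "ess_sup_on a b u \<le> ereal (u b)"
    by (rule ess_sup_on_le[OF m]) (auto intro!: monoD[OF assms(1)])
  moreover have "ereal (u a) \<le> ess_inf_on a b u"
    by (rule ess_inf_on_ge[OF m]) (auto intro!: monoD[OF assms(1)])
  ultimately show ?thesis using f(1,2,3) by (metis ereal_less_eq(3) diff_mono)
qed

lemma ess_sup_on_gt_if_not_null:
  assumes "v \<in> borel_measurable lborel" "S \<in> sets lborel" "S \<notin> null_sets lborel"
    and "S \<subseteq> {a<..<b}" "\<And>y. y \<in> S \<Longrightarrow> w < ereal (v y)"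
  shows "w < ess_sup_on a b v"
proof (rule ccontr)
  assume "\<not> ?thesis"
  then have "AE y in lborel. y \<notin> S"
    using AE_le_ess_sup_on[OF assms(1), of a b] assms(4,5)
    by (fastforce simp: not_less elim!: eventually_mono)
  then show False using assms(2,3) by (simp add: AE_iff_null_sets)
qed

lemma not_null_if_ess_sup_on_gt:
  assumes "v \<in> borel_measurable lborel" "w < ess_sup_on a b v"
  shows "{a<..<b} \<inter> {y. w < ereal (v y)} \<notin> null_sets lborel"
proof
  assume "{a<..<b} \<inter> {y. w < ereal (v y)} \<in> null_sets lborel"
  then have "AE y in lborel. a < y \<and> y < b \<longrightarrow> ereal (v y) \<le> w"
    by (auto dest!: AE_not_in elim!: eventually_mono simp: not_less)
  then have "ess_sup_on a b v \<le> w" by (rule ess_sup_on_le[OF assms(1)])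
  then show False using assms(2) by simp
qed

lemma Ioo_eq_UN_shrunken: "{a<..<b::real} = (\<Union>n. {a + 1 / real (Suc n)<..<b - 1 / real (Suc n)})"
proof (intro equalityI subsetI)
  fix y assume "y \<in> {a<..<b}"
  then have "0 < min (y - a) (b - y)" by auto
  then obtain n where "1 / real (Suc n) < min (y - a) (b - y)" by (rule nat_approx_posE)
  then have "y \<in> {a + 1 / real (Suc n)<..<b - 1 / real (Suc n)}" by auto
  then show "y \<in> (\<Union>n. {a + 1 / real (Suc n)<..<b - 1 / real (Suc n)})" by blast
next
  fix y assume "y \<in> (\<Union>n. {a + 1 / real (Suc n)<..<b - 1 / real (Suc n)})"
  then obtain n where "a + 1 / real (Suc n) < y" "y < b - 1 / real (Suc n)" by auto
  moreover have "0 < 1 / real (Suc n)" by simp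
  ultimately have "a < y" "y < b" by linarith+
  then show "y \<in> {a<..<b}" by simp
qed

text \<open>The windowed essential supremum is lower semicontinuous: if it exceeds \<open>w\<close> at \<open>x\<close>, then
  \<open>{v > w}\<close> is non-null inside a slightly shrunken window, which stays inside all nearby windows.\<close>

lemma open_ess_sup_on_window_gt:
  assumes v: "v \<in> borel_measurable lborel"
  shows "open {x. a < ess_sup_on (x - r) (x + r) v}"
  unfolding open_dist
proof (intro ballI, simp only: mem_Collect_eq)
  fix x assume "a < ess_sup_on (x - r) (x + r) v"
  then obtain w where w: "a < w" "w < ess_sup_on (x - r) (x + r) v" using dense by blast
  define S where
    "S n = {x - r + 1 / real (Suc n)<..<x + r - 1 / real (Suc n)}
      \<inter> {y. w < ereal (v y)}" for n :: nat
  have "{x - r<..<x + r} \<inter> {y. w < ereal (v y)} = (\<Union>n. S n)"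
    unfolding S_def by (subst Ioo_eq_UN_shrunken) blast
  then have "(\<Union>n. S n) \<notin> null_sets lborel" using not_null_if_ess_sup_on_gt[OF v w(2)] by simp
  then obtain n where n: "S n \<notin> null_sets lborel" by (metis null_sets_UN)
  have Sm: "S n \<in> sets lborel" unfolding S_def using v by measurable
  show "\<exists>e>0. \<forall>y. dist y x < e \<longrightarrow> a < ess_sup_on (y - r) (y + r) v"
  proof (intro exI[of _ "1 / real (Suc n)"] conjI allI impI)
    show "0 < 1 / real (Suc n)" by simp
  next
    fix x' assume "dist x' x < 1 / real (Suc n)"
    then have "S n \<subseteq> {x' - r<..<x' + r}" unfolding S_def by (auto simp: dist_real_def)
    then have "w < ess_sup_on (x' - r) (x' + r) v"
      by (rule ess_sup_on_gt_if_not_null[OF v Sm n]) (simp add: S_def)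
    then show "a < ess_sup_on (x' - r) (x' + r) v" by (rule less_trans[OF w(1)])
  qed
qed

lemma borel_measurable_ess_sup_on_window:
  assumes "v \<in> borel_measurable lborel"
  shows "(\<lambda>x. ess_sup_on (x - r) (x + r) v) \<in> borel_measurable lborel"
proof -
  have "(\<lambda>x. ess_sup_on (x - r) (x + r) v) -` {a<..} \<inter> space lborel
        = {x. a < ess_sup_on (x - r) (x + r) v}" for a
    by auto
  then show ?thesis
    unfolding borel_measurable_ereal_iff_Ioi
      using borel_open[OF open_ess_sup_on_window_gt[OF assms]]
    by simp
qed

lemma borel_measurable_osc_on_window:
  assumes "v \<in> borel_measurable lborel"
  shows "(\<lambda>x. osc_on (x - r) (x + r) v) \<in> borel_measurable lborel"
proof -
  have "(\<lambda>y. - v y) \<in> borel_measurable lborel" using assms by measurable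
  note sup = borel_measurable_ess_sup_on_window[OF assms]
    borel_measurable_ess_sup_on_window[OF this]
  have "(\<lambda>x. real_of_ereal (ess_sup_on (x - r) (x + r) v - - ess_sup_on (x - r) (x + r)
        (\<lambda>y. - v y)))
        \<in> borel_measurable lborel"
    using sup by measurable
  then show ?thesis unfolding osc_on_def ess_inf_on_conv_ess_sup_on .
qed

lemma null_sets_reflect:
  assumes "N \<in> null_sets lborel"
  shows "uminus -` N \<in> null_sets (lborel :: real measure)"
proof -
  have m: "uminus \<in> borel_measurable (lborel :: real measure)" by simp
  have "emeasure lborel (uminus -` N \<inter> space lborel) = emeasure (distr lborel borel uminus) N"
    using assms by (subst emeasure_distr) auto
  then show ?thesis
    using assms measurable_sets[OF m, of N] by (auto simp: lborel_distr_uminus null_sets_def)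
qed

lemma AE_lborel_reflect:
  assumes "AE x in lborel. P x"
  shows "AE x in lborel. P (- x :: real)"
proof -
  obtain N where N: "{x \<in> space lborel. \<not> P x} \<subseteq> N" "emeasure lborel N = 0" "N \<in> sets lborel"
    using assms by (rule AE_E)
  then have "N \<in> null_sets lborel" by auto
  then show ?thesis by (rule AE_I'[OF null_sets_reflect]) (use N(1) in auto)
qed

lemma AE_lborel_translate:
  assumes "AE x in lborel. P x"
  shows "AE x in lborel. P (x + a :: real)"
proof -
  obtain N where N: "{x \<in> space lborel. \<not> P x} \<subseteq> N" "emeasure lborel N = 0" "N \<in> sets lborel"
    using assms by (rule AE_E)
  then have "N \<in> null_sets lborel" by auto
  then show ?thesis by (rule AE_I'[OF null_sets_translation[of N "- a"]]) (use N(1) in auto)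
qed

lemma countable_separated:
  fixes L :: "real set"
  assumes "\<delta> > 0" and sep: "\<And>s t. s \<in> L \<Longrightarrow> t \<in> L \<Longrightarrow> s < t \<Longrightarrow> \<delta> \<le> t - s"
  shows "countable L"
proof -
  have "inj_on (\<lambda>t. \<lfloor>t / \<delta>\<rfloor>) L"
  proof (rule inj_onI)
    fix s t assume st: "s \<in> L" "t \<in> L" "\<lfloor>s / \<delta>\<rfloor> = \<lfloor>t / \<delta>\<rfloor>"
    then have "\<bar>s / \<delta> - t / \<delta>\<bar> < 1" by linarith
    then have "\<bar>s - t\<bar> < \<delta>" using assms(1)
      by (simp add: diff_divide_distrib[symmetric] divide_less_eq)
    then show "s = t" using sep[OF st(1,2)] sep[OF st(2,1)] by (cases s t rule: linorder_cases) auto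
  qed
  then show ?thesis by (rule countable_image_inj_on[rotated]) simp
qed

text \<open>Call \<open>p \<in> G\<close> exceptional if \<open>G \<inter> {p<..<p+\<delta>}\<close> is null. The exceptional points with no
  other exceptional point less than \<open>\<delta>/2\<close> to their left are \<open>\<delta>/2\<close>-separated, hence countable;
  each of the others lies in one of the null sets \<open>G \<inter> {p<..<p+\<delta>}\<close>, with \<open>p\<close> exceptional and
  chosen according to a rational just to its left.\<close>

lemma AE_right_window_not_null:
  fixes G :: "real set"
  assumes "\<delta> > 0"
  shows "AE p in lborel. p \<in> G \<longrightarrow> G \<inter> {p<..<p+\<delta>} \<notin> null_sets lborel"
proof -
  define T where "T = {p \<in> G. G \<inter> {p<..<p+\<delta>} \<in> null_sets lborel}"
  define L where "L = {t \<in> T. \<forall>p\<in>T. \<not> (t - \<delta>/2 < p \<and> p < t)}"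
  define near where "near \<rho> p \<longleftrightarrow> p \<in> T \<and> \<rho> - \<delta>/2 < p \<and> p < \<rho>" for \<rho> p
  define X where "X \<rho> = (if \<exists>p. near \<rho> p
      then G \<inter> {(SOME p. near \<rho> p)<..<(SOME p. near \<rho> p) + \<delta>} else {})" for \<rho>
  have "countable L"
    by (rule countable_separated[of "\<delta>/2"]) (use assms in \<open>force simp: L_def\<close>)+
  then have "L \<in> null_sets lborel" by (rule countable_imp_null_set_lborel)
  moreover have "X \<rho> \<in> null_sets lborel" for \<rho>
    using someI_ex[of "near \<rho>"] by (auto simp: X_def near_def T_def)
  then have "(\<Union>\<rho>\<in>\<rat>. X \<rho>) \<in> null_sets lborel" by (intro null_sets_UN') (auto simp: countable_rat)
  ultimately have null: "L \<union> (\<Union>\<rho>\<in>\<rat>. X \<rho>) \<in> null_sets lborel" by (rule null_sets.Un)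
  have cover: "T \<subseteq> L \<union> (\<Union>\<rho>\<in>\<rat>. X \<rho>)"
  proof
    fix t assume t: "t \<in> T"
    show "t \<in> L \<union> (\<Union>\<rho>\<in>\<rat>. X \<rho>)"
    proof (cases "t \<in> L")
      case False
      then obtain p where p: "p \<in> T" "t - \<delta>/2 < p" "p < t" using t by (auto simp: L_def)
      then obtain \<rho> where \<rho>: "\<rho> \<in> \<rat>" "p < \<rho>" "\<rho> < t" using Rats_dense_in_real by blast
      then have "near \<rho> p" using p unfolding near_def by auto
      then have "near \<rho> (SOME p. near \<rho> p)" by (rule someI)
      then have "t \<in> X \<rho>" using \<open>near \<rho> p\<close> t p \<rho> unfolding X_def near_def T_def by auto
      then show ?thesis using \<rho>(1) by blast
    qed blast
  qed
  show ?thesis by (rule AE_I'[OF null]) (use cover in \<open>auto simp: T_def\<close>)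
qed

lemma AE_left_window_not_null:
  fixes G :: "real set"
  assumes "\<delta> > 0"
  shows "AE p in lborel. p \<in> G \<longrightarrow> G \<inter> {p-\<delta><..<p} \<notin> null_sets lborel"
  using AE_lborel_reflect[OF AE_right_window_not_null[OF assms, of "uminus -` G"]]
proof eventually_elim
  case (elim p)
  have eq: "uminus -` G \<inter> {- p<..<- p + \<delta>} = uminus -` (G \<inter> {p-\<delta><..<p})" by auto
  show ?case
  proof
    assume "p \<in> G"
    then have "uminus -` (G \<inter> {p-\<delta><..<p}) \<notin> null_sets lborel" using elim unfolding eq by simp
    then show "G \<inter> {p-\<delta><..<p} \<notin> null_sets lborel" using null_sets_reflect by blast
  qed
qed

text \<open>Where \<open>v\<close> exceeds its essential supremum over the window, a rational \<open>q\<close> lies in between;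
  the point is then in \<open>{v > q}\<close> while the window meets \<open>{v > q}\<close> in a null set, which the
  hypothesis excludes almost everywhere.\<close>

lemma AE_le_ess_sup_on_window:
  assumes v: "v \<in> borel_measurable lborel"
    and window: "\<And>G. AE p in lborel. p \<in> G \<longrightarrow> G \<inter> {l p<..<h p} \<notin> null_sets lborel"
  shows "AE p in lborel. ereal (v p) \<le> ess_sup_on (l p) (h p) v"
proof -
  define G where "G q = {y. q < v y}" for q :: real
  have Gm: "G q \<in> sets lborel" for q unfolding G_def using v by measurable
  have "AE p in lborel. \<forall>q\<in>\<rat>. p \<in> G q \<longrightarrow> G q \<inter> {l p<..<h p} \<notin> null_sets lborel"
    unfolding AE_ball_countable[OF countable_rat] using window by blast
  then show ?thesis
  proof eventually_elim
    case (elim p)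
    show ?case
    proof (rule ccontr)
      assume "\<not> ?case"
      then have lt: "ess_sup_on (l p) (h p) v < ereal (v p)" by simp
      obtain q where q: "q \<in> \<rat>" "ess_sup_on (l p) (h p) v < ereal q" "q < v p"
      proof (cases "ess_sup_on (l p) (h p) v")
        case (real e)
        then obtain q where "q \<in> \<rat>" "e < q" "q < v p" using lt Rats_dense_in_real by force
        then show ?thesis using that real by auto
      next
        case MInf
        obtain q where "q \<in> \<rat>" "v p - 1 < q" "q < v p" using Rats_dense_in_real[of "v p - 1" "v p"]
          by auto
        then show ?thesis using that MInf by auto
      qed (use lt in simp)
      have "AE y in lborel. y \<notin> G q \<inter> {l p<..<h p}"
        using AE_le_ess_sup_on[OF v, of "l p" "h p"]
        by eventually_elim (use q(2) in \<open>auto simp: G_def dest: le_less_trans\<close>)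
      then have "G q \<inter> {l p<..<h p} \<in> null_sets lborel" using Gm by (subst AE_iff_null_sets) auto
      moreover have "p \<in> G q" using q unfolding G_def by simp
      ultimately show False using elim q(1) by blast
    qed
  qed
qed

lemma AE_endpoints_within_ess_range:
  assumes v: "v \<in> borel_measurable lborel" and r: "r > 0"
  shows "AE x in lborel.
    ess_inf_on (x - r) (x + r) v \<le> ereal (v (x - r)) \<and> ereal (v (x - r)) \<le> ess_sup_on (x - r) (x + r) v \<and>
    ess_inf_on (x - r) (x + r) v \<le> ereal (v (x + r)) \<and> ereal (v (x + r)) \<le> ess_sup_on (x - r) (x + r) v"
proof -
  have r2: "2 * r > 0" using r by simp
  have "(\<lambda>y. - v y) \<in> borel_measurable lborel" using v by measurable
  note sup = AE_le_ess_sup_on_window[OF v] AE_le_ess_sup_on_window[OF this]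
  have right: "AE p in lborel. ereal (v p) \<le> ess_sup_on p (p + 2 * r) v
                    \<and> ereal (- v p) \<le> ess_sup_on p (p + 2 * r) (\<lambda>y. - v y)"
    using sup[of "\<lambda>p. p" "\<lambda>p. p + 2 * r", OF AE_right_window_not_null[OF r2]]
    by eventually_elim auto
  have left: "AE p in lborel. ereal (v p) \<le> ess_sup_on (p - 2 * r) p v
                    \<and> ereal (- v p) \<le> ess_sup_on (p - 2 * r) p (\<lambda>y. - v y)"
    using sup[of "\<lambda>p. p - 2 * r" "\<lambda>p. p", OF AE_left_window_not_null[OF r2]] by eventually_elim auto
  show ?thesis using AE_lborel_translate[OF right, of "-r"] AE_lborel_translate[OF left, of r]
  proof eventually_elim
    case (elim x)
    have "x + - r + 2 * r = x + r" "x + - r = x - r" "x + r - 2 * r = x - r" by simp_all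
    then show ?case using elim unfolding ess_inf_on_conv_ess_sup_on
      by (simp add: add.commute) (metis ereal_uminus_le_reorder uminus_ereal.simps(1))
  qed
qed

lemma AE_abs_diff_le_osc_on:
  assumes v: "v \<in> borel_measurable lborel" and r: "r > 0" and C: "AE y in lborel. \<bar>v y\<bar> \<le> C"
  shows "AE x in lborel. \<bar>v (x + r) - v (x - r)\<bar> \<le> osc_on (x - r) (x + r) v"
  using AE_endpoints_within_ess_range[OF v r]
proof eventually_elim
  case (elim x)
  have "x - r < x + r" using r by simp
  note f = osc_on_essentially_bounded[OF v this C]
  show ?case using elim f(1,2,3)
    by (metis (no_types, opaque_lifting) abs_le_iff ereal_less_eq(3) diff_mono minus_diff_eq)
qed

definition clip :: "real \<Rightarrow> real" where
  "clip t = max (-1) (min 1 t)"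

lemma clip_range: "-1 \<le> clip t" "clip t \<le> 1" "\<bar>clip t\<bar> \<le> 1"
  by (auto simp: clip_def)

lemma clip_mono: "x \<le> y \<Longrightarrow> clip x \<le> clip y"
  by (auto simp: clip_def)

lemma clip_clip [simp]: "clip (clip t) = clip t"
  by (auto simp: clip_def)

lemma abs_clip_diff_le: "\<bar>clip x - clip y\<bar> \<le> \<bar>x - y\<bar>"
  by (auto simp: clip_def)

lemma clip_sq_diff_le: "(clip x - clip y)\<^sup>2 \<le> (x - y)\<^sup>2"
  using abs_clip_diff_le[of x y] by (metis abs_ge_zero power2_abs power_mono)

lemma borel_measurable_clip [measurable]: "clip \<in> borel_measurable borel"
  unfolding clip_def by measurable

lemma W_clip_le:
  assumes "W 1 = 0" "W (-1) = 0" "\<And>t. W t \<ge> (0::real)"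
  shows "W (clip t) \<le> W t"
  using assms by (auto simp: clip_def max_def min_def)

lemma continuous_bounded_on_interval:
  assumes "continuous_on UNIV (W :: real \<Rightarrow> real)"
  obtains K where "\<And>t. \<bar>t\<bar> \<le> C \<Longrightarrow> \<bar>W t\<bar> \<le> K"
proof -
  have "compact (W ` {-C..C})"
    by (rule compact_continuous_image) (use assms continuous_on_subset in auto)
  then obtain K where K: "\<forall>x\<in>W ` {-C..C}. norm x \<le> K" using compact_imp_bounded bounded_iff by metis
  show ?thesis
  proof (rule that)
    fix t :: real assume "\<bar>t\<bar> \<le> C"
    then show "\<bar>W t\<bar> \<le> K" using K by (auto simp: abs_le_iff)
  qed
qed

lemma borel_measurable_shift:
  assumes "w \<in> borel_measurable lborel"
  shows "(\<lambda>y. w (y + c)) \<in> borel_measurable lborel"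
proof -
  have [measurable]: "w \<in> borel_measurable borel" using assms by (simp add: measurable_lborel2)
  have "(\<lambda>y. w (y + c)) \<in> borel_measurable borel" by measurable
  then show ?thesis by (simp only: measurable_lborel2)
qed

lemma integral_lborel_shift:
  "integral\<^sup>L lborel f = integral\<^sup>L lborel (\<lambda>x. f (t + x :: real) :: real)"
  using lborel_integral_real_affine[of 1 f t] by simp

lemma integrable_indicator_mult_bounded:
  fixes f :: "real \<Rightarrow> real"
  assumes f: "f \<in> borel_measurable lborel" and S: "S \<in> sets lborel" "emeasure lborel S < \<infinity>"
    and K: "AE x in lborel. \<bar>f x\<bar> \<le> K"
  shows "integrable lborel (\<lambda>x. indicator S x * f x)"
proof (rule Bochner_Integration.integrable_bound[where f="\<lambda>x. indicator S x * K"])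
  show "integrable lborel (\<lambda>x. indicator S x * K)"
    by (rule integrable_mult_left) (use S in auto)
  show "(\<lambda>x. indicator S x * f x) \<in> borel_measurable lborel" using f S by measurable
  show "AE x in lborel. norm (indicator S x * f x) \<le> norm (indicator S x * K)"
    using K by eventually_elim (auto simp: indicator_def)
qed

lemma abs_sq_diff_le_4:
  assumes "\<bar>a\<bar> \<le> 1" "\<bar>b\<bar> \<le> (1::real)"
  shows "\<bar>(a - b)\<^sup>2\<bar> \<le> 4"
proof -
  have "\<bar>a - b\<bar> \<le> 2" using assms by linarith
  then have "\<bar>a - b\<bar>\<^sup>2 \<le> 2\<^sup>2" by (intro power_mono) auto
  then show ?thesis by simp
qed

lemma set_integrable_Ioo_bounded:
  fixes f :: "real \<Rightarrow> real"
  assumes "f \<in> borel_measurable lborel" "AE x in lborel. \<bar>f x\<bar> \<le> K"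
  shows "set_integrable lborel {a<..<b} f"
  unfolding set_integrable_def
  using integrable_indicator_mult_bounded[OF assms(1) _ _ assms(2), of "{a<..<b}"]
  by (cases "a \<le> b") (auto simp: emeasure_lborel_Ioo)

lemma sum_atMost_if_le:
  fixes f :: "nat \<Rightarrow> real"
  assumes "n \<le> m"
  shows "(\<Sum>k\<le>m. if k \<le> n then f k else 0) = (\<Sum>k\<le>n. f k)"
proof -
  have "(\<Sum>k\<le>m. if k \<le> n then f k else 0) = sum f {k \<in> {..m}. k \<le> n}"
    by (rule sum.inter_filter[symmetric]) simp
  also have "{k \<in> {..m}. k \<le> n} = {..n}" using assms by auto
  finally show ?thesis .
qed

lemma sum_atMost_if_between:
  fixes f :: "nat \<Rightarrow> real"
  assumes "n \<le> m"
  shows "(\<Sum>k\<le>m. if 1 \<le> k \<and> k \<le> n then f k else 0) = (\<Sum>k\<in>{1..n}. f k)"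
proof -
  have "(\<Sum>k\<le>m. if 1 \<le> k \<and> k \<le> n then f k else 0) = sum f {k \<in> {..m}. 1 \<le> k \<and> k \<le> n}"
    by (rule sum.inter_filter[symmetric]) simp
  also have "{k \<in> {..m}. 1 \<le> k \<and> k \<le> n} = {1..n}" using assms by auto
  finally show ?thesis .
qed

section \<open>The monotone minimizer\<close>

locale transition_problem =
  fixes r R :: real and W :: "real \<Rightarrow> real"
  assumes r_pos: "r > 0" and hyp_H: "hyp_H W" and R_gt: "R > 2 * r + 1"
begin

lemma W_continuous: "continuous_on UNIV W"
  and W_1: "W 1 = 0" and W_minus_1: "W (-1) = 0"
  using hyp_H by (simp_all add: hyp_H_def)

lemma W_nonneg: "W t \<ge> 0"
proof -
  have "\<forall>t. t \<noteq> 1 \<and> t \<noteq> -1 \<longrightarrow> W t > 0" using hyp_H by (simp add: hyp_H_def)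
  then show ?thesis using W_1 W_minus_1 by (cases "t = 1 \<or> t = -1") (auto simp: less_imp_le)
qed

definition "\<kappa> = 1 / (2 * r\<^sup>2)"

text \<open>Admissible functions are \<open>-1\<close> on \<open>(-\<infinity>, A]\<close> and \<open>1\<close> on \<open>[B, \<infinity>)\<close>.\<close>

definition "A = - R + r"
definition "B = R - r"

lemma \<kappa>_pos: "\<kappa> > 0"
  unfolding \<kappa>_def using r_pos by simp

lemma A_B: "A < B" "A < -1" "1 < B"
  unfolding A_def B_def using r_pos R_gt by auto

lemmas discrete_hyps = W_continuous less_imp_le[OF \<kappa>_pos] W_1 W_minus_1

lemmas g_min = greatest_minimal_chain(2)[OF discrete_hyps(1,2)]
  and g_range = greatest_minimal_chain_range[OF discrete_hyps]
  and g_0 = greatest_minimal_chain_0[OF discrete_hyps]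
  and g_beyond = greatest_minimal_chain_beyond[OF discrete_hyps]
  and g_antimono_length = greatest_minimal_chain_antimono_length[OF discrete_hyps]
  and g_cross = greatest_minimal_chain_cross[OF discrete_hyps]

text \<open>Every \<open>y > A\<close> is written uniquely as \<open>y = s + 2 r k\<close> with base point \<open>s \<in> (A - 2r, A]\<close>;
  \<open>k = cell_index y\<close>, and the lattice \<open>s + 2r\<nat>\<close> has \<open>chain_length s\<close> points in \<open>(A, B)\<close>.\<close>

definition cell_index :: "real \<Rightarrow> nat" where
  "cell_index y = nat \<lceil>(y - A) / (2 * r)\<rceil>"

definition chain_length :: "real \<Rightarrow> nat" where
  "chain_length s = nat \<lceil>(B - s) / (2 * r)\<rceil> - 1"

lemma less_B_iff_le_chain_length:
  assumes "s < B"
  shows "s + 2 * r * real k < B \<longleftrightarrow> k \<le> chain_length s"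
proof -
  define x where "x = (B - s) / (2 * r)"
  have xpos: "x > 0" unfolding x_def using assms r_pos by simp
  have "s + 2 * r * real k < B \<longleftrightarrow> real k < x"
    unfolding x_def using r_pos by (simp add: pos_less_divide_eq algebra_simps)
  also have "\<dots> \<longleftrightarrow> int k < \<lceil>x\<rceil>" by (simp add: less_ceiling_iff)
  also have "\<dots> \<longleftrightarrow> k \<le> chain_length s"
  proof -
    have "\<lceil>x\<rceil> \<ge> 1" using xpos by (simp add: le_ceiling_iff)
    then show ?thesis unfolding chain_length_def x_def[symmetric] by linarith
  qed
  finally show ?thesis .
qed

lemma chain_length_antimono: "s \<le> s' \<Longrightarrow> chain_length s' \<le> chain_length s"
  unfolding chain_length_def using r_pos
  by (intro diff_le_mono nat_mono ceiling_mono divide_right_mono) auto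

lemma chain_length_le_Suc:
  assumes "s < s' + 2 * r"
  shows "chain_length s' \<le> Suc (chain_length s)"
proof -
  have "(B - s') / (2 * r) = (B - s) / (2 * r) + (s - s') / (2 * r)"
    by (simp add: diff_divide_distrib)
  moreover have "(s - s') / (2 * r) \<le> 1" using assms r_pos by (simp add: pos_divide_le_eq)
  ultimately have "\<lceil>(B - s') / (2 * r)\<rceil> \<le> \<lceil>(B - s) / (2 * r)\<rceil> + 1"
    by (metis add_le_cancel_left ceiling_add_one ceiling_mono)
  then show ?thesis unfolding chain_length_def by linarith
qed

lemma cell_index_iff:
  assumes "A - 2 * r < y"
  shows "y \<in> {A - 2 * r + 2 * r * real k<..A + 2 * r * real k} \<longleftrightarrow> k = cell_index y"
proof -
  define x where "x = (y - A) / (2 * r)"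
  have r2: "0 < 2 * r" using r_pos by simp
  have "y \<in> {A - 2 * r + 2 * r * real k<..A + 2 * r * real k}
          \<longleftrightarrow> (real k - 1) * (2 * r) < y - A \<and> y - A \<le> real k * (2 * r)"
    by (auto simp: algebra_simps)
  also have "\<dots> \<longleftrightarrow> real k - 1 < x \<and> x \<le> real k"
    unfolding x_def using pos_less_divide_eq[OF r2] pos_divide_le_eq[OF r2] by auto
  also have "\<dots> \<longleftrightarrow> \<lceil>x\<rceil> = int k" by (simp add: ceiling_eq_iff)
  also have "\<dots> \<longleftrightarrow> k = cell_index y"
  proof -
    have "-1 < x" unfolding x_def using assms r2 pos_less_divide_eq[OF r2, of "-1"] by auto
    then have "0 \<le> \<lceil>x\<rceil>" by (simp add: le_ceiling_iff)
    then show ?thesis unfolding cell_index_def x_def[symmetric] by auto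
  qed
  finally show ?thesis .
qed

lemma cell_index_base:
  assumes "A - 2 * r < s" "s \<le> A"
  shows "cell_index (s + 2 * r * real k) = k"
  using cell_index_iff[of "s + 2 * r * real k" k] assms r_pos
  by (simp add: algebra_simps) (smt (verit) mult_nonneg_nonneg of_nat_0_le_iff)

lemma cell_index_decompose:
  assumes "A < y"
  shows "A - 2 * r < y - 2 * r * real (cell_index y)" "y - 2 * r * real (cell_index y) \<le> A"
  using cell_index_iff[of y "cell_index y"] assms r_pos by (auto simp: algebra_simps)

lemma cell_index_left: "y \<le> A \<Longrightarrow> cell_index y = 0"
  unfolding cell_index_def using r_pos by (simp add: ceiling_le_iff divide_nonpos_pos)

lemma cell_index_mono: "y \<le> y' \<Longrightarrow> cell_index y \<le> cell_index y'"
  unfolding cell_index_def using r_pos by (intro nat_mono ceiling_mono divide_right_mono) auto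

definition u_min :: "real \<Rightarrow> real" where
  "u_min y = greatest_minimal_chain \<kappa> W (chain_length (y - 2 * r * real (cell_index y)))
     (cell_index y)"

lemma u_min_lattice:
  assumes "A - 2 * r < s" "s \<le> A"
  shows "u_min (s + 2 * r * real k) = greatest_minimal_chain \<kappa> W (chain_length s) k"
  unfolding u_min_def cell_index_base[OF assms] by simp

lemma u_min_left: "y \<le> A \<Longrightarrow> u_min y = -1"
  unfolding u_min_def by (simp add: cell_index_left g_0)

lemma u_min_right:
  assumes "B \<le> y" shows "u_min y = 1"
proof -
  have "A < y" using assms A_B by simp
  define s where "s = y - 2 * r * real (cell_index y)"
  have s: "A - 2 * r < s" "s \<le> A" using cell_index_decompose[OF \<open>A < y\<close>] unfolding s_def by auto
  have "y = s + 2 * r * real (cell_index y)" unfolding s_def by simp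
  then have "chain_length s < cell_index y"
    using less_B_iff_le_chain_length[of s "cell_index y"] s A_B assms by auto
  then show ?thesis unfolding u_min_def s_def[symmetric] by (simp add: g_beyond)
qed

lemma abs_u_min_le: "\<bar>u_min y\<bar> \<le> 1"
  unfolding u_min_def using g_range by (simp add: abs_le_iff)

text \<open>Along one lattice the chain is monotone; between consecutive lattices the
  chain lengths differ by at most one, which is covered by the interleaving of greatest minimal
  chains.\<close>

lemma mono_u_min: "mono u_min"
proof (rule monoI)
  fix y y' :: real assume yy: "y \<le> y'"
  show "u_min y \<le> u_min y'"
  proof (cases "y \<le> A")
    case True then show ?thesis using u_min_left[OF True] g_range unfolding u_min_def by simp
  next
    case False
    then have Ay: "A < y" and Ay': "A < y'" using yy by auto
    define k k' where "k = cell_index y" and "k' = cell_index y'"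
    define s s' where "s = y - 2 * r * real k" and "s' = y' - 2 * r * real k'"
    have s: "A - 2 * r < s" "s \<le> A" using cell_index_decompose[OF Ay] unfolding s_def k_def by auto
    have s': "A - 2 * r < s'" "s' \<le> A" using cell_index_decompose[OF Ay'] unfolding s'_def k'_def
      by auto
    have kk: "k \<le> k'" unfolding k_def k'_def using cell_index_mono[OF yy] .
    have uy: "u_min y = greatest_minimal_chain \<kappa> W (chain_length s) k"
      unfolding u_min_def s_def k_def ..
    have uy': "u_min y' = greatest_minimal_chain \<kappa> W (chain_length s') k'"
      unfolding u_min_def s'_def k'_def ..
    show ?thesis
    proof (cases "k = k'")
      case True
      then have "s \<le> s'" using yy unfolding s_def s'_def by simp
      then show ?thesis unfolding uy uy' True using g_antimono_length chain_length_antimono by blast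
    next
      case False
      then have "k < k'" using kk by simp
      moreover have "chain_length s' \<le> Suc (chain_length s)" using s s'
        by (intro chain_length_le_Suc) simp
      ultimately show ?thesis unfolding uy uy' using g_cross by blast
    qed
  qed
qed

lemma borel_measurable_u_min: "u_min \<in> borel_measurable lborel"
  using mono_u_min borel_measurable_mono by simp

lemma admissible_u_min: "admissible r R u_min"
  unfolding admissible_def Linf_def
  using borel_measurable_u_min abs_u_min_le u_min_left u_min_right unfolding A_def B_def
  by (auto intro!: exI[of _ 1])

end

section \<open>The difference energy and its decomposition along lattices\<close>

context transition_problem
begin

lemma borel_measurable_W [measurable]: "W \<in> borel_measurable borel"
  by (rule borel_measurable_continuous_onI[OF W_continuous])

lemma borel_measurable_W_comp:
  "w \<in> borel_measurable lborel \<Longrightarrow> (\<lambda>x. W (w x)) \<in> borel_measurable lborel"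
  using measurable_compose[OF _ borel_measurable_W] by simp

lemma W_bounded_on_unit: obtains K where "\<And>t. \<bar>t\<bar> \<le> 1 \<Longrightarrow> \<bar>W t\<bar> \<le> K"
  by (rule continuous_bounded_on_interval[OF W_continuous, where C=1]) blast

definition normalized :: "(real \<Rightarrow> real) \<Rightarrow> bool" where
  "normalized w \<longleftrightarrow> w \<in> borel_measurable lborel \<and> (\<forall>y. \<bar>w y\<bar> \<le> 1)
     \<and> (AE x in lborel. x \<le> A \<longrightarrow> w x = -1) \<and> (AE x in lborel. B \<le> x \<longrightarrow> w x = 1)"

definition diff_energy :: "(real \<Rightarrow> real) \<Rightarrow> real" where
  "diff_energy w = \<kappa> * (LINT x:{-R<..<R}|lborel. (w (x + r) - w (x - r))\<^sup>2)
     + (LINT x:{-R<..<R}|lborel. W (w x))"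

definition diff_density :: "(real \<Rightarrow> real) \<Rightarrow> real \<Rightarrow> real" where
  "diff_density w y = \<kappa> * (indicator {A - 2 * r<..<B} y * (w (y + 2 * r) - w y)\<^sup>2)
     + indicator {A<..<B} y * W (w y)"

definition "n_cells = nat \<lceil>(B - A) / (2 * r)\<rceil> + 1"

definition fibre_energy :: "(real \<Rightarrow> real) \<Rightarrow> real \<Rightarrow> real" where
  "fibre_energy w s =
     indicator {A - 2 * r<..A} s * (\<Sum>k\<le>n_cells. diff_density w (s + 2 * r * real k))"

lemma borel_measurable_diff_density:
  assumes "w \<in> borel_measurable lborel"
  shows "diff_density w \<in> borel_measurable lborel"
proof -
  have [measurable]: "w \<in> borel_measurable borel" using assms by (simp add: measurable_lborel2)
  have "diff_density w \<in> borel_measurable borel" unfolding diff_density_def by measurable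
  then show ?thesis by (simp only: measurable_lborel2)
qed

lemma diff_density_bounded:
  assumes "\<And>y. \<bar>w y\<bar> \<le> 1"
  obtains K where "\<And>y. \<bar>diff_density w y\<bar> \<le> K"
proof -
  obtain KW where KW: "\<And>t. \<bar>t\<bar> \<le> 1 \<Longrightarrow> \<bar>W t\<bar> \<le> KW" by (rule W_bounded_on_unit) blast
  have "\<bar>diff_density w y\<bar> \<le> \<kappa> * 4 + \<bar>KW\<bar>" for y
  proof -
    have "\<bar>indicator {A - 2 * r<..<B} y * (w (y + 2 * r) - w y)\<^sup>2\<bar> \<le> (4::real)"
      using abs_sq_diff_le_4[OF assms assms] by (auto simp: indicator_def)
    then have "\<bar>\<kappa> * (indicator {A - 2 * r<..<B} y * (w (y + 2 * r) - w y)\<^sup>2)\<bar> \<le> \<kappa> * 4"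
      using \<kappa>_pos by (simp add: abs_mult)
    moreover have "\<bar>indicator {A<..<B} y * W (w y)\<bar> \<le> \<bar>KW\<bar>"
      using KW[OF assms, of y] abs_ge_self[of KW] by (auto simp: indicator_def)
    ultimately show ?thesis unfolding diff_density_def by linarith
  qed
  then show ?thesis by (rule that)
qed

lemma integrable_diff_density_shift:
  assumes "w \<in> borel_measurable lborel" "\<And>y. \<bar>w y\<bar> \<le> 1"
    and S: "S \<in> sets lborel" "emeasure lborel S < \<infinity>"
  shows "integrable lborel (\<lambda>y. indicator S y * diff_density w (y + c))"
proof -
  obtain K where "\<And>y. \<bar>diff_density w y\<bar> \<le> K"
    by (rule diff_density_bounded[of w]) (use assms(2) in blast)+
  then show ?thesis
    by (intro integrable_indicator_mult_bounded[OF
          borel_measurable_shift[OF borel_measurable_diff_density] S]) (use assms(1) in auto)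
qed

lemma set_integral_diff_sq_eq:
  fixes w :: "real \<Rightarrow> real"
  shows "(LINT x:{-R<..<R}|lborel. (w (x + r) - w (x - r))\<^sup>2) =
   integral\<^sup>L lborel (\<lambda>y. indicator {A - 2 * r<..<B} y * (w (y + 2 * r) - w y)\<^sup>2)"
proof -
  define f where "f y = indicator {A - 2 * r<..<B} y * (w (y + 2 * r) - w y)\<^sup>2" for y
  have "f (- r + x) = indicator {-R<..<R} x * (w (x + r) - w (x - r))\<^sup>2" for x
  proof -
    have "indicator {A - 2 * r<..<B} (x - r) = (indicator {-R<..<R} x :: real)"
      unfolding A_def B_def by (auto simp: indicator_def)
    then show ?thesis unfolding f_def by (simp add: add.commute)
  qed
  then have "(LINT x:{-R<..<R}|lborel. (w (x + r) - w (x - r))\<^sup>2) = integral\<^sup>L lborel (\<lambda>x. f (- r + x))"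
    unfolding set_lebesgue_integral_def by simp
  also have "\<dots> = integral\<^sup>L lborel f"
    by (rule integral_lborel_shift[symmetric])
  finally show ?thesis unfolding f_def .
qed

lemma set_integral_W_eq:
  assumes "normalized w"
  shows "(LINT x:{-R<..<R}|lborel. W (w x))
      = integral\<^sup>L lborel (\<lambda>y. indicator {A<..<B} y * W (w y))"
  unfolding set_lebesgue_integral_def
proof (rule integral_cong_AE)
  have "(\<lambda>x. W (w x)) \<in> borel_measurable lborel"
    using assms borel_measurable_W_comp unfolding normalized_def by blast
  then show "(\<lambda>x. indicator {-R<..<R} x *\<^sub>R W (w x)) \<in> borel_measurable lborel"
    and "(\<lambda>y. indicator {A<..<B} y * W (w y)) \<in> borel_measurable lborel" by measurable
  have "AE x in lborel. x \<le> A \<longrightarrow> w x = -1" "AE x in lborel. B \<le> x \<longrightarrow> w x = 1"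
    using assms by (auto simp: normalized_def)
  then show "AE x in lborel. indicator {-R<..<R} x *\<^sub>R W (w x) = indicator {A<..<B} x * W (w x)"
  proof eventually_elim
    case (elim x)
    show ?case
    proof (cases "A < x \<and> x < B")
      case True
      then have "x \<in> {-R<..<R}" using r_pos unfolding A_def B_def by auto
      then show ?thesis using True by (simp add: indicator_def)
    next
      case False
      then have "W (w x) = 0 \<or> x \<notin> {-R<..<R}" using elim W_1 W_minus_1 by (auto simp: not_less)
      then show ?thesis using False by (auto simp: indicator_def)
    qed
  qed
qed

lemma diff_energy_eq_integral:
  assumes "normalized w"
  shows "diff_energy w = integral\<^sup>L lborel (diff_density w)"
proof -
  have wm: "w \<in> borel_measurable lborel" and b: "\<And>y. \<bar>w y\<bar> \<le> 1"
    using assms by (auto simp: normalized_def)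
  have fin: "emeasure lborel {A - 2 * r<..<B} < \<infinity>" "emeasure lborel {A<..<B} < \<infinity>"
    using A_B r_pos by (auto simp: emeasure_lborel_Ioo)
  obtain KW where KW: "\<And>t. \<bar>t\<bar> \<le> 1 \<Longrightarrow> \<bar>W t\<bar> \<le> KW" by (rule W_bounded_on_unit) blast
  have "integrable lborel (\<lambda>y. indicator {A - 2 * r<..<B} y * (w (y + 2 * r) - w y)\<^sup>2)"
    by (rule integrable_indicator_mult_bounded[where K=4])
       (use borel_measurable_shift[OF wm] wm fin abs_sq_diff_le_4[OF b b] in auto)
  moreover have "integrable lborel (\<lambda>y. indicator {A<..<B} y * W (w y))"
    by (rule integrable_indicator_mult_bounded[where K=KW])
       (use borel_measurable_W_comp[OF wm] fin KW b in auto)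
  ultimately have "integral\<^sup>L lborel (diff_density w)
      = \<kappa> * integral\<^sup>L lborel (\<lambda>y. indicator {A - 2 * r<..<B} y * (w (y + 2 * r) - w y)\<^sup>2)
      + integral\<^sup>L lborel (\<lambda>y. indicator {A<..<B} y * W (w y))"
    unfolding diff_density_def by simp
  also have "\<dots> = diff_energy w"
    unfolding diff_energy_def set_integral_diff_sq_eq set_integral_W_eq[OF assms] ..
  finally show ?thesis by (rule sym)
qed

lemma cell_index_le_n_cells:
  assumes "y < B" shows "cell_index y \<le> n_cells"
proof -
  have "(y - A) / (2 * r) \<le> (B - A) / (2 * r)" using assms r_pos by (simp add: divide_right_mono)
  then have "\<lceil>(y - A) / (2 * r)\<rceil> \<le> \<lceil>(B - A) / (2 * r)\<rceil>" by (rule ceiling_mono)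
  then show ?thesis unfolding cell_index_def n_cells_def by linarith
qed

lemma diff_density_partition:
  "diff_density w y =
     (\<Sum>k\<le>n_cells. indicator {A - 2 * r + 2 * r * real k<..A + 2 * r * real k} y * diff_density w y)"
proof (cases "A - 2 * r < y \<and> y < B")
  case True
  then have "(\<Sum>k\<le>n_cells. indicator {A - 2 * r + 2 * r * real k<..A + 2 * r * real k} y)
           = (\<Sum>k\<le>n_cells. if k = cell_index y then 1 else (0::real))"
  proof (intro sum.cong refl)
    fix k
    show "indicator {A - 2 * r + 2 * r * real k<..A + 2 * r * real k} y
          = (if k = cell_index y then 1 else (0::real))"
      using cell_index_iff[of y k] True by (auto simp: indicator_def)
  qed
  also have "\<dots> = 1" using cell_index_le_n_cells True by simp
  finally show ?thesis by (simp add: sum_distrib_right[symmetric])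
next
  case False
  then have "diff_density w y = 0" unfolding diff_density_def using A_B r_pos
    by (auto simp: indicator_def)
  then show ?thesis by simp
qed

lemma emeasure_lborel_Ioc_finite: "emeasure lborel {a<..b::real} < \<infinity>"
  by (cases "a \<le> b") (auto simp: emeasure_lborel_Ioc)

text \<open>Cutting \<open>(A - 2r, B)\<close> into the cells \<open>(A - 2r + 2rk, A + 2rk]\<close> and translating each cell
  back onto \<open>(A - 2r, A]\<close>.\<close>

lemma integral_diff_density_eq_fibre:
  assumes "normalized w"
  shows "integral\<^sup>L lborel (diff_density w) = integral\<^sup>L lborel (fibre_energy w)"
proof -
  have wm: "w \<in> borel_measurable lborel" and b: "\<And>y. \<bar>w y\<bar> \<le> 1"
    using assms by (auto simp: normalized_def)
  define I where "I k = {A - 2 * r + 2 * r * real k<..A + 2 * r * real k}" for k :: nat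
  have cell: "integral\<^sup>L lborel (\<lambda>y. indicator (I k) y * diff_density w y)
      = integral\<^sup>L lborel (\<lambda>s. indicator {A - 2 * r<..A} s * diff_density w (s + 2 * r * real k))"
    for k
  proof -
    have "integral\<^sup>L lborel (\<lambda>y. indicator (I k) y * diff_density w y)
        = integral\<^sup>L lborel (\<lambda>s. indicator (I k) (2 * r * real k + s) * diff_density w (2 * r * real k + s))"
      by (rule integral_lborel_shift[of "\<lambda>y. indicator (I k) y * diff_density w y"])
    also have "\<dots> = integral\<^sup>L lborel (\<lambda>s. indicator {A - 2 * r<..A} s * diff_density w (s + 2 * r * real k))"
      by (intro Bochner_Integration.integral_cong) (auto simp: I_def indicator_def add.commute)
    finally show ?thesis .
  qed
  have "integral\<^sup>L lborel (diff_density w)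
      = integral\<^sup>L lborel (\<lambda>y. \<Sum>k\<le>n_cells. indicator (I k) y * diff_density w y)"
    unfolding I_def
    by (rule Bochner_Integration.integral_cong[OF refl], rule diff_density_partition)
  also have "\<dots> = (\<Sum>k\<le>n_cells. integral\<^sup>L lborel (\<lambda>y. indicator (I k) y * diff_density w y))"
    using integrable_diff_density_shift[OF wm b, of "I _" 0] emeasure_lborel_Ioc_finite
    by (intro Bochner_Integration.integral_sum) (simp add: I_def)
  also have "\<dots> = (\<Sum>k\<le>n_cells. integral\<^sup>L lborel
                     (\<lambda>s. indicator {A - 2 * r<..A} s * diff_density w (s + 2 * r * real k)))"
    using cell by simp
  also have "\<dots> = integral\<^sup>L lborel (fibre_energy w)"
    unfolding fibre_energy_def sum_distrib_left
    using integrable_diff_density_shift[OF wm b] emeasure_lborel_Ioc_finite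
    by (intro Bochner_Integration.integral_sum[symmetric]) simp
  finally show ?thesis .
qed

lemma integrable_fibre_energy:
  assumes "normalized w"
  shows "integrable lborel (fibre_energy w)"
proof -
  have wm: "w \<in> borel_measurable lborel" and b: "\<And>y. \<bar>w y\<bar> \<le> 1"
    using assms by (auto simp: normalized_def)
  have eq: "fibre_energy w
      = (\<lambda>s. \<Sum>k\<le>n_cells. indicator {A - 2 * r<..A} s * diff_density w (s + 2 * r * real k))"
    by (rule ext) (simp only: fibre_energy_def sum_distrib_left)
  show ?thesis
    unfolding eq
    using integrable_diff_density_shift[OF wm b, of "{A - 2 * r<..A}"] emeasure_lborel_Ioc_finite
    by (intro Bochner_Integration.integrable_sum) simp
qed

end

section \<open>Minimality of \<open>u_min\<close> for the difference energy\<close>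

context transition_problem
begin

lemma chain_length_less_n_cells:
  assumes "A - 2 * r < s" shows "chain_length s < n_cells"
proof -
  have "(B - s) / (2 * r) = (B - A) / (2 * r) + (A - s) / (2 * r)"
    by (simp add: diff_divide_distrib)
  moreover have "(A - s) / (2 * r) < 1" using assms r_pos by (simp add: pos_divide_less_eq)
  ultimately have "\<lceil>(B - s) / (2 * r)\<rceil> \<le> \<lceil>(B - A) / (2 * r)\<rceil> + 1"
    by (metis add_le_cancel_left ceiling_add_one ceiling_mono less_eq_real_def)
  then show ?thesis unfolding chain_length_def n_cells_def by linarith
qed

lemma diff_density_lattice:
  assumes s: "A - 2 * r < s" "s \<le> A" and "k \<le> n_cells"
    and lattice: "\<And>k. k \<le> n_cells \<Longrightarrow> w (s + 2 * r * real k) = a k"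
  shows "diff_density w (s + 2 * r * real k)
         = \<kappa> * (if k \<le> chain_length s then (a (Suc k) - a k)\<^sup>2 else 0)
           + (if 1 \<le> k \<and> k \<le> chain_length s then W (a k) else 0)"
proof -
  have "s < B" using s A_B by simp
  have "0 \<le> 2 * r * real k" using r_pos by simp
  then have p: "A - 2 * r < s + 2 * r * real k" using s by linarith
  have "A < s + 2 * r * real k \<longleftrightarrow> 1 \<le> k"
  proof
    assume "1 \<le> k" then have "2 * r * 1 \<le> 2 * r * real k" using r_pos by (intro mult_left_mono) auto
    then show "A < s + 2 * r * real k" using s by linarith
  qed (use s in \<open>cases k, auto\<close>)
  then have i1: "s + 2 * r * real k \<in> {A - 2 * r<..<B} \<longleftrightarrow> k \<le> chain_length s"
    and i2: "s + 2 * r * real k \<in> {A<..<B} \<longleftrightarrow> 1 \<le> k \<and> k \<le> chain_length s"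
    using less_B_iff_le_chain_length[OF \<open>s < B\<close>, of k] p by auto
  show ?thesis
  proof (cases "k \<le> chain_length s")
    case True
    then have "Suc k \<le> n_cells" using chain_length_less_n_cells[OF s(1)] by simp
    moreover have "s + 2 * r * real k + 2 * r = s + 2 * r * real (Suc k)"
      by (simp add: algebra_simps)
    ultimately have "w (s + 2 * r * real k + 2 * r) = a (Suc k)" using lattice by metis
    then show ?thesis
      unfolding diff_density_def using i1 i2 True lattice[OF \<open>k \<le> n_cells\<close>]
      by (simp add: indicator_def)
  next
    case False
    then show ?thesis unfolding diff_density_def using i1 i2 p by (simp add: indicator_def)
  qed
qed

lemma fibre_sum_eq_chain_energy:
  assumes s: "A - 2 * r < s" "s \<le> A"
    and lattice: "\<And>k. k \<le> n_cells \<Longrightarrow> w (s + 2 * r * real k) = a k"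
  shows "(\<Sum>k\<le>n_cells. diff_density w (s + 2 * r * real k)) = chain_energy \<kappa> W (chain_length s) a"
proof -
  let ?n = "chain_length s"
  have n: "?n \<le> n_cells" using chain_length_less_n_cells[OF s(1)] by simp
  have "(\<Sum>k\<le>n_cells. diff_density w (s + 2 * r * real k))
      = (\<Sum>k\<le>n_cells. \<kappa> * (if k \<le> ?n then (a (Suc k) - a k)\<^sup>2 else 0)
                       + (if 1 \<le> k \<and> k \<le> ?n then W (a k) else 0))"
    using diff_density_lattice[where w=w and a=a, OF s _ lattice] by simp
  also have "\<dots> = \<kappa> * (\<Sum>k\<le>n_cells. if k \<le> ?n then (a (Suc k) - a k)\<^sup>2 else 0)
                  + (\<Sum>k\<le>n_cells. if 1 \<le> k \<and> k \<le> ?n then W (a k) else 0)"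
    by (simp add: sum.distrib sum_distrib_left)
  also have "\<dots> = chain_energy \<kappa> W ?n a"
    unfolding chain_energy_def sum_atMost_if_le[OF n] sum_atMost_if_between[OF n] ..
  finally show ?thesis .
qed

text \<open>On every lattice the restriction of a normalized function is a competitor for the
  discrete problem, whose minimum is attained by the restriction of \<open>u_min\<close>.\<close>

lemma fibre_energy_u_min_le:
  assumes s: "A - 2 * r < s" "s \<le> A" and w: "\<And>y. \<bar>w y\<bar> \<le> 1" "w s = -1"
    and right: "\<And>k. k \<le> n_cells \<Longrightarrow> B \<le> s + 2 * r * real k \<Longrightarrow> w (s + 2 * r * real k) = 1"
  shows "fibre_energy u_min s \<le> fibre_energy w s"
proof -
  define a where "a k = (if k \<le> n_cells then w (s + 2 * r * real k) else 1)" for k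
  have "a \<in> chain_space (chain_length s)"
    unfolding chain_space_def
  proof (intro CollectI conjI allI impI)
    show "a 0 = -1" using w(2) by (simp add: a_def)
    fix k
    show "-1 \<le> a k" "a k \<le> 1" using w(1)[of "s + 2 * r * real k"] by (auto simp: a_def abs_le_iff)
    assume "chain_length s < k"
    then have "\<not> s + 2 * r * real k < B" using less_B_iff_le_chain_length[of s k] s A_B by auto
    then show "a k = 1" using right by (auto simp: a_def)
  qed
  then have "chain_energy \<kappa> W (chain_length s) (greatest_minimal_chain \<kappa> W (chain_length s))
             \<le> chain_energy \<kappa> W (chain_length s) a"
    by (rule g_min)
  moreover have "(\<Sum>k\<le>n_cells. diff_density w (s + 2 * r * real k))
      = chain_energy \<kappa> W (chain_length s) a"
    by (rule fibre_sum_eq_chain_energy[OF s]) (simp add: a_def)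
  moreover have "(\<Sum>k\<le>n_cells. diff_density u_min (s + 2 * r * real k))
      = chain_energy \<kappa> W (chain_length s) (greatest_minimal_chain \<kappa> W (chain_length s))"
    by (rule fibre_sum_eq_chain_energy[OF s]) (simp add: u_min_lattice[OF s])
  ultimately show ?thesis unfolding fibre_energy_def using s by simp
qed

lemma normalized_u_min: "normalized u_min"
  unfolding normalized_def using borel_measurable_u_min abs_u_min_le u_min_left u_min_right by auto

lemma diff_energy_u_min_le:
  assumes "normalized w"
  shows "diff_energy u_min \<le> diff_energy w"
proof -
  have left: "AE x in lborel. x \<le> A \<longrightarrow> w x = -1" and right: "AE x in lborel. B \<le> x \<longrightarrow> w x = 1"
    using assms by (auto simp: normalized_def)
  have "AE s in lborel. \<forall>k\<in>{..n_cells}. (s + 2 * r * real k \<le> A \<longrightarrow> w (s + 2 * r * real k) = -1)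
                 \<and> (B \<le> s + 2 * r * real k \<longrightarrow> w (s + 2 * r * real k) = 1)"
  proof (rule AE_finite_allI)
    fix k :: nat
    show "AE s in lborel. (s + 2 * r * real k \<le> A \<longrightarrow> w (s + 2 * r * real k) = -1)
                 \<and> (B \<le> s + 2 * r * real k \<longrightarrow> w (s + 2 * r * real k) = 1)"
      using AE_lborel_translate[OF left] AE_lborel_translate[OF right] by eventually_elim auto
  qed simp
  then have "AE s in lborel. fibre_energy u_min s \<le> fibre_energy w s"
  proof eventually_elim
    case (elim s)
    show ?case
    proof (cases "s \<in> {A - 2 * r<..A}")
      case True
      then show ?thesis
        using elim assms
        by (intro fibre_energy_u_min_le) (auto simp: normalized_def dest: bspec[of _ _ 0])
    qed (simp add: fibre_energy_def)
  qed
  then have "integral\<^sup>L lborel (fibre_energy u_min) \<le> integral\<^sup>L lborel (fibre_energy w)"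
    by (intro integral_mono_AE integrable_fibre_energy normalized_u_min assms)
  then show ?thesis
    using diff_energy_eq_integral integral_diff_density_eq_fibre normalized_u_min assms by simp
qed

end

section \<open>Comparison with the nonlocal energy\<close>

context transition_problem
begin

lemma set_integrable_diff_sq:
  fixes w :: "real \<Rightarrow> real"
  assumes "w \<in> borel_measurable lborel" "\<And>y. \<bar>w y\<bar> \<le> 1"
  shows "set_integrable lborel {-R<..<R} (\<lambda>x. (w (x + r) - w (x - r))\<^sup>2)"
proof (rule set_integrable_Ioo_bounded)
  show "(\<lambda>x. (w (x + r) - w (x - r))\<^sup>2) \<in> borel_measurable lborel"
    using borel_measurable_shift[OF assms(1), of r] borel_measurable_shift[OF assms(1), of "-r"]
    by simp
  show "AE x in lborel. \<bar>(w (x + r) - w (x - r))\<^sup>2\<bar> \<le> 4"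
    by (rule AE_I2) (rule abs_sq_diff_le_4[OF assms(2) assms(2)])
qed

lemma set_integrable_osc_sq:
  assumes v: "v \<in> borel_measurable lborel" and C: "AE y in lborel. \<bar>v y\<bar> \<le> C"
  shows "set_integrable lborel {-R<..<R} (\<lambda>x. (osc_on (x - r) (x + r) v)\<^sup>2)"
proof (rule set_integrable_Ioo_bounded)
  show "(\<lambda>x. (osc_on (x - r) (x + r) v)\<^sup>2) \<in> borel_measurable lborel"
    using borel_measurable_osc_on_window[OF v] by simp
  show "AE x in lborel. \<bar>(osc_on (x - r) (x + r) v)\<^sup>2\<bar> \<le> (2 * C)\<^sup>2"
  proof (rule AE_I2)
    fix x
    have "x - r < x + r" using r_pos by simp
    then have "(osc_on (x - r) (x + r) v)\<^sup>2 \<le> (2 * C)\<^sup>2"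
      using osc_on_essentially_bounded(4,5)[OF v _ C] by (intro power_mono) auto
    then show "\<bar>(osc_on (x - r) (x + r) v)\<^sup>2\<bar> \<le> (2 * C)\<^sup>2" by simp
  qed
qed

lemma energy_u_min_le_diff_energy: "energy r W (-R) R u_min \<le> diff_energy u_min"
proof -
  have "(LINT x:{-R<..<R}|lborel. (osc_on (x - r) (x + r) u_min)\<^sup>2)
        \<le> (LINT x:{-R<..<R}|lborel. (u_min (x + r) - u_min (x - r))\<^sup>2)"
  proof (rule set_integral_mono)
    show "set_integrable lborel {-R<..<R} (\<lambda>x. (osc_on (x - r) (x + r) u_min)\<^sup>2)"
      by (rule set_integrable_osc_sq[OF borel_measurable_u_min, of 1]) (use abs_u_min_le in auto)
    show "set_integrable lborel {-R<..<R} (\<lambda>x. (u_min (x + r) - u_min (x - r))\<^sup>2)"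
      by (rule set_integrable_diff_sq[OF borel_measurable_u_min abs_u_min_le])
    fix x
    have "x - r < x + r" using r_pos by simp
    then have "0 \<le> osc_on (x - r) (x + r) u_min"
      "osc_on (x - r) (x + r) u_min \<le> u_min (x + r) - u_min (x - r)"
      using osc_on_essentially_bounded(4)[OF borel_measurable_u_min _ AE_I2[OF abs_u_min_le]]
        osc_on_mono_le[OF mono_u_min _ abs_u_min_le] by blast+
    then show "(osc_on (x - r) (x + r) u_min)\<^sup>2 \<le> (u_min (x + r) - u_min (x - r))\<^sup>2"
      by (intro power_mono)
  qed
  then show ?thesis
    unfolding energy_def diff_energy_def \<kappa>_def by (simp add: divide_right_mono)
qed

lemma normalized_clip_comp:
  assumes "admissible r R v"
  shows "normalized (\<lambda>y. clip (v y))"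
proof -
  have left: "AE x in lborel. x \<le> A \<longrightarrow> v x = -1" and right: "AE x in lborel. B \<le> x \<longrightarrow> v x = 1"
    using assms unfolding admissible_def A_def B_def by auto
  have "AE x in lborel. x \<le> A \<longrightarrow> clip (v x) = -1" using left by eventually_elim (simp add: clip_def)
  moreover have "AE x in lborel. B \<le> x \<longrightarrow> clip (v x) = 1" using right
    by eventually_elim (simp add: clip_def)
  moreover have "v \<in> borel_measurable lborel" using assms by (simp add: admissible_def Linf_def)
  ultimately show ?thesis unfolding normalized_def using clip_range by auto
qed

lemma set_integral_clip_diff_sq_le_osc:
  assumes vm: "v \<in> borel_measurable lborel" and C: "AE y in lborel. \<bar>v y\<bar> \<le> C"
  shows "(LINT x:{-R<..<R}|lborel. (clip (v (x + r)) - clip (v (x - r)))\<^sup>2)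
         \<le> (LINT x:{-R<..<R}|lborel. (osc_on (x - r) (x + r) v)\<^sup>2)"
proof (rule set_integral_mono_AE)
  have "(\<lambda>y. clip (v y)) \<in> borel_measurable lborel" using vm by measurable
  from set_integrable_diff_sq[OF this]
  show "set_integrable lborel {-R<..<R} (\<lambda>x. (clip (v (x + r)) - clip (v (x - r)))\<^sup>2)"
    using clip_range by simp
  show "set_integrable lborel {-R<..<R} (\<lambda>x. (osc_on (x - r) (x + r) v)\<^sup>2)"
    by (rule set_integrable_osc_sq[OF vm C])
  show "AE x\<in>{-R<..<R} in lborel. (clip (v (x + r)) - clip (v (x - r)))\<^sup>2
      \<le> (osc_on (x - r) (x + r) v)\<^sup>2"
    using AE_abs_diff_le_osc_on[OF vm r_pos C]
  proof eventually_elim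
    case (elim x)
    then have "(v (x + r) - v (x - r))\<^sup>2 \<le> (osc_on (x - r) (x + r) v)\<^sup>2"
      by (metis abs_ge_zero power2_abs power_mono)
    then show ?case using clip_sq_diff_le[of "v (x + r)" "v (x - r)"] by simp
  qed
qed

lemma set_integral_W_clip_le:
  assumes vm: "v \<in> borel_measurable lborel" and C: "AE y in lborel. \<bar>v y\<bar> \<le> C"
  shows "(LINT x:{-R<..<R}|lborel. W (clip (v x))) \<le> (LINT x:{-R<..<R}|lborel. W (v x))"
proof (rule set_integral_mono)
  obtain KW where KW: "\<And>t. \<bar>t\<bar> \<le> 1 \<Longrightarrow> \<bar>W t\<bar> \<le> KW" by (rule W_bounded_on_unit) blast
  have "(\<lambda>y. clip (v y)) \<in> borel_measurable lborel" using vm by measurable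
  then show "set_integrable lborel {-R<..<R} (\<lambda>x. W (clip (v x)))"
    by (intro set_integrable_Ioo_bounded[where K=KW]) (use borel_measurable_W_comp KW clip_range in auto)
  obtain KC where KC: "\<And>t. \<bar>t\<bar> \<le> C \<Longrightarrow> \<bar>W t\<bar> \<le> KC"
    by (rule continuous_bounded_on_interval[OF W_continuous]) blast
  show "set_integrable lborel {-R<..<R} (\<lambda>x. W (v x))"
    by (rule set_integrable_Ioo_bounded[OF borel_measurable_W_comp[OF vm], where K=KC])
       (use C KC in \<open>auto elim!: eventually_mono\<close>)
  show "W (clip (v x)) \<le> W (v x)" for x by (rule W_clip_le[OF W_1 W_minus_1 W_nonneg])
qed

lemma diff_energy_clip_le_energy:
  assumes "admissible r R v"
  shows "diff_energy (\<lambda>y. clip (v y)) \<le> energy r W (-R) R v"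
proof -
  have vm: "v \<in> borel_measurable lborel" using assms by (simp add: admissible_def Linf_def)
  obtain C where C: "AE y in lborel. \<bar>v y\<bar> \<le> C" using assms by (auto simp: admissible_def Linf_def)
  show ?thesis
    using set_integral_clip_diff_sq_le_osc[OF vm C] set_integral_W_clip_le[OF vm C] \<kappa>_pos
    unfolding diff_energy_def energy_def \<kappa>_def[symmetric] by (smt (verit) mult_left_mono)
qed

section \<open>Two competitors\<close>

definition jump :: "real \<Rightarrow> real" where
  "jump y = (if y < 0 then -1 else 1)"

lemma admissible_jump: "admissible r R jump"
proof -
  have "jump \<in> borel_measurable borel" unfolding jump_def by measurable
  then show ?thesis
    unfolding admissible_def Linf_def using R_gt r_pos by (auto simp: jump_def intro!: exI[of _ 1])
qed

lemma diff_energy_jump: "diff_energy jump = 4 / r"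
proof -
  have "(LINT x:{-R<..<R}|lborel. (jump (x + r) - jump (x - r))\<^sup>2)
      = integral\<^sup>L lborel (\<lambda>x. 4 * indicator {-r..<r} x)"
    unfolding set_lebesgue_integral_def
    by (intro Bochner_Integration.integral_cong)
       (use R_gt r_pos in \<open>auto simp: jump_def indicator_def\<close>)
  also have "\<dots> = 4 * (2 * r)"
    using r_pos by (simp add: measure_lborel_Ico)
  finally have "(LINT x:{-R<..<R}|lborel. (jump (x + r) - jump (x - r))\<^sup>2) = 8 * r" by simp
  moreover have "W (jump x) = 0" for x using W_1 W_minus_1 by (simp add: jump_def)
  ultimately show ?thesis
    unfolding diff_energy_def \<kappa>_def set_lebesgue_integral_def using r_pos
    by (simp add: power2_eq_square)
qed

lemma admissible_clip: "admissible r R clip"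
  unfolding admissible_def Linf_def using R_gt r_pos clip_range
  by (auto simp: clip_def intro!: exI[of _ 1])

lemma set_integral_clip_increment: "(LINT x:{-R<..<R}|lborel. clip (x + r) - clip (x - r)) = 4 * r"
proof -
  define g1 where "g1 y = indicator {-R + r<..<R + r} y * clip y" for y
  define g2 where "g2 y = indicator {-R - r<..<R - r} y * clip y" for y
  have ig: "integrable lborel (\<lambda>x. indicator {a<..<b} x * clip (x + c))" if "a \<le> b" for a b c
    by (rule integrable_indicator_mult_bounded[where K=1])
       (use that borel_measurable_shift[of clip] clip_range in \<open>auto simp: emeasure_lborel_Ioo\<close>)
  have R: "-R \<le> R" "-R + r \<le> R + r" "-R - r \<le> R - r" using R_gt r_pos by auto
  have shift1: "integral\<^sup>L lborel (\<lambda>x. indicator {-R<..<R} x * clip (x + r)) = integral\<^sup>L lborel g1"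
    using integral_lborel_shift[of g1 r]
    by (simp add: g1_def indicator_def add.commute cong: Bochner_Integration.integral_cong)
  have shift2: "integral\<^sup>L lborel (\<lambda>x. indicator {-R<..<R} x * clip (x - r)) = integral\<^sup>L lborel g2"
    using integral_lborel_shift[of g2 "-r"]
    by (simp add: g2_def indicator_def cong: Bochner_Integration.integral_cong)
  have "g1 y - g2 y = indicator {R - r..<R + r} y + indicator {-R - r<..-R + r} y" for y
  proof -
    have "1 \<le> R - r" "-R + r \<le> -1" using R_gt r_pos by auto
    then show ?thesis unfolding g1_def g2_def using r_pos by (auto simp: indicator_def clip_def)
  qed
  moreover have "integrable lborel g1" "integrable lborel g2"
    using ig[OF R(2), of 0] ig[OF R(3), of 0] unfolding g1_def g2_def by simp_all
  ultimately have "integral\<^sup>L lborel g1 - integral\<^sup>L lborel g2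
      = integral\<^sup>L lborel (\<lambda>y. indicator {R - r..<R + r} y + indicator {-R - r<..-R + r} y :: real)"
    by (simp flip: Bochner_Integration.integral_diff)
  also have "\<dots> = 4 * r"
    using r_pos
    by (subst Bochner_Integration.integral_add) (auto simp: measure_lborel_Ico measure_lborel_Ioc)
  finally have "integral\<^sup>L lborel g1 - integral\<^sup>L lborel g2 = 4 * r" .
  moreover have "(LINT x:{-R<..<R}|lborel. clip (x + r) - clip (x - r))
      = integral\<^sup>L lborel (\<lambda>x. indicator {-R<..<R} x * clip (x + r))
        - integral\<^sup>L lborel (\<lambda>x. indicator {-R<..<R} x * clip (x - r))"
    unfolding set_lebesgue_integral_def using ig[OF R(1), of r] ig[OF R(1), of "-r"]
    by (simp add: right_diff_distrib flip: Bochner_Integration.integral_diff)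
  ultimately show ?thesis using shift1 shift2 by simp
qed

lemma set_integral_W_clip: "(LINT x:{-R<..<R}|lborel. W (clip x)) = c_W W"
proof -
  have "(LINT x:{-R<..<R}|lborel. W (clip x)) = (LINT x:{-1..1}|lborel. W x)"
    unfolding set_lebesgue_integral_def
    by (intro Bochner_Integration.integral_cong)
       (use R_gt r_pos W_1 W_minus_1 in \<open>auto simp: indicator_def clip_def\<close>)
  also have "\<dots> = integral {-1..1} W"
    by (rule set_borel_integral_eq_integral(2))
       (unfold set_integrable_def, rule borel_integrable_compact,
        auto intro: continuous_on_subset[OF W_continuous])
  finally show ?thesis unfolding c_W_def .
qed

text \<open>The increments of \<open>clip\<close> over windows of length \<open>2r\<close> lie in \<open>[0, 2r]\<close>, so their squares
  are at most \<open>2r\<close> times themselves, and the increments integrate to \<open>4r\<close>.\<close>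

lemma diff_energy_clip_le: "diff_energy clip \<le> 4 + c_W W"
proof -
  define d where "d x = clip (x + r) - clip (x - r)" for x
  have d: "0 \<le> d x" "d x \<le> 2 * r" for x
    unfolding d_def using clip_mono[of "x - r" "x + r"] abs_clip_diff_le[of "x + r" "x - r"] r_pos
    by auto
  have dm: "d \<in> borel_measurable lborel"
    unfolding d_def using borel_measurable_shift[of clip] by measurable
  have "(LINT x:{-R<..<R}|lborel. (d x)\<^sup>2) \<le> (LINT x:{-R<..<R}|lborel. 2 * r * d x)"
  proof (rule set_integral_mono)
    show "set_integrable lborel {-R<..<R} (\<lambda>x. (d x)\<^sup>2)"
      unfolding d_def by (rule set_integrable_diff_sq) (use clip_range in simp_all)
    show "set_integrable lborel {-R<..<R} (\<lambda>x. 2 * r * d x)"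
      by (rule set_integrable_Ioo_bounded[where K="2 * r * 2 * r"])
         (use dm d r_pos in \<open>auto intro!: AE_I2 simp: abs_mult mult_left_mono\<close>)
    show "(d x)\<^sup>2 \<le> 2 * r * d x" for x using d[of x] by (simp add: power2_eq_square mult_right_mono)
  qed
  also have "\<dots> = 8 * r\<^sup>2"
    using set_integral_clip_increment unfolding d_def by (simp add: power2_eq_square)
  finally have "\<kappa> * (LINT x:{-R<..<R}|lborel. (d x)\<^sup>2) \<le> 4"
    unfolding \<kappa>_def using r_pos by (simp add: divide_le_eq)
  then show ?thesis unfolding diff_energy_def set_integral_W_clip d_def by simp
qed

end

theorem proposition2p2:
  fixes r R :: real and W :: "real \<Rightarrow> real"
  assumes "r > 0" and "hyp_H W" and "R > 2 * r + 1"
  shows "\<exists>uR. admissible r R uR \<and> mono uR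
           \<and> (\<forall>v. admissible r R v \<longrightarrow> energy r W (-R) R uR \<le> energy r W (-R) R v)
           \<and> energy r W (-R) R uR \<le> min (4 / r) (4 + c_W W)"
proof -
  interpret transition_problem r R W using assms by unfold_locales
  have upper: "energy r W (-R) R u_min \<le> diff_energy (\<lambda>y. clip (v y))" if "admissible r R v" for v
    using energy_u_min_le_diff_energy diff_energy_u_min_le[OF normalized_clip_comp[OF that]]
    by linarith
  have clip_jump: "(\<lambda>y. clip (jump y)) = jump" by (auto simp: clip_def jump_def)
  have "energy r W (-R) R u_min \<le> energy r W (-R) R v" if "admissible r R v" for v
    using upper[OF that] diff_energy_clip_le_energy[OF that] by linarith
  moreover have "energy r W (-R) R u_min \<le> 4 / r"
    using upper[OF admissible_jump] diff_energy_jump clip_jump by simp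
  moreover have "energy r W (-R) R u_min \<le> 4 + c_W W"
    using upper[OF admissible_clip] diff_energy_clip_le by simp
  ultimately show ?thesis using admissible_u_min mono_u_min by auto
qed

end
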